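(* Let $(\mathcal V,g)$ be a spacetime and $\vec\xi$ a hypersurface-orthogonal Killing vector field, i.e. $\bm\xi\wedge d\bm\xi=0$. Then its Bel current satisfies $\bm j(\vec\xi)\wedge\bm\xi=0$, i.e. $\vec j(\vec\xi)$ is proportional to $\vec\xi$.
   Context: A spacetime is a 4-dimensional manifold with a Lorentzian metric $g$ of signature $(-,+,+,+)$, Levi-Civita connection $\nabla$, Riemann tensor $R_{\alpha\beta\lambda\mu}$. A Killing vector field satisfies $\nabla_{(\alpha}\xi_{\beta)}=0$; $\bm\xi$ is the associated 1-form. The Bel tensor is $$B_{\alpha\beta\lambda\mu}= R_{\alpha\rho\lambda\sigma} R_{\beta}{}^{\rho}{}_{\mu}{}^{\sigma} +R_{\alpha\rho\mu\sigma} R_{\beta}{}^{\rho}{}_{\lambda}{}^{\sigma} -\tfrac{1}{2}g_{\alpha\beta} R_{\rho\tau\lambda\sigma}R^{\rho\tau}{}_{\mu}{}^{\sigma} -\tfrac{1}{2}g_{\lambda\mu} R_{\alpha\rho\sigma\tau}R_{\beta}{}^{\rho\sigma\tau}+ \tfrac{1}{8}g_{\alpha\beta}g_{\lambda\mu} R_{\rho\tau\sigma\nu} R^{\rho\tau\sigma\nu}.$$ The Bel current of Killing vectors $\vec\xi_1,\vec\xi_2,\vec\xi_3$ is $j_\mu(\vec\xi_1,\vec\xi_2,\vec\xi_3)=B_{(\alpha\beta\lambda)\mu}\xi_1^\alpha\xi_2^\beta\xi_3^\lambda$, and $\vec j(\vec\xi)\equiv\vec j(\vec\xi,\vec\xi,\vec\xi)$;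 $\bm j$ denotes the associated 1-form. *)

theory Defs
  imports "HOL-Analysis.Analysis"
begin

text \<open>Local coordinate description of a spacetime: an open coordinate domain
  U of R^4 (index type 4) carrying a smooth Lorentzian metric g with
  components g x a b.\<close>

type_synonym pt = "real ^ 4"

definition pd :: "4 \<Rightarrow> (pt \<Rightarrow> real) \<Rightarrow> pt \<Rightarrow> real" where
  "pd i f x = deriv (\<lambda>t. f (x + t *\<^sub>R axis i 1)) 0"

fun iter_pd :: "4 list \<Rightarrow> (pt \<Rightarrow> real) \<Rightarrow> pt \<Rightarrow> real" where
  "iter_pd [] f = f"
| "iter_pd (i # is) f = pd i (iter_pd is f)"

definition smooth_on :: "pt set \<Rightarrow> (pt \<Rightarrow> real) \<Rightarrow> bool" where
  "smooth_on U f \<longleftrightarrow> (\<forall>is. iter_pd is f differentiable_on U)"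

definition metric_matrix :: "(pt \<Rightarrow> 4 \<Rightarrow> 4 \<Rightarrow> real) \<Rightarrow> pt \<Rightarrow> real ^ 4 ^ 4" where
  "metric_matrix g x = (\<chi> a b. g x a b)"

definition lorentzian_matrix :: "real ^ 4 ^ 4 \<Rightarrow> bool" where
  "lorentzian_matrix G \<longleftrightarrow> transpose G = G \<and>
     (\<exists>P :: real ^ 4 ^ 4. invertible P \<and>
        transpose P ** G ** P = (\<chi> i j. if i = j then (if i = 0 then -1 else 1) else 0))"

definition spacetime_chart :: "pt set \<Rightarrow> (pt \<Rightarrow> 4 \<Rightarrow> 4 \<Rightarrow> real) \<Rightarrow> bool" where
  "spacetime_chart U g \<longleftrightarrow> open U \<and> U \<noteq> {} \<and>
     (\<forall>a b. smooth_on U (\<lambda>x. g x a b)) \<and>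
     (\<forall>x\<in>U. lorentzian_matrix (metric_matrix g x))"

definition ginv :: "(pt \<Rightarrow> 4 \<Rightarrow> 4 \<Rightarrow> real) \<Rightarrow> pt \<Rightarrow> 4 \<Rightarrow> 4 \<Rightarrow> real" where
  "ginv g x a b = matrix_inv (metric_matrix g x) $ a $ b"

definition christoffel :: "(pt \<Rightarrow> 4 \<Rightarrow> 4 \<Rightarrow> real) \<Rightarrow> pt \<Rightarrow> 4 \<Rightarrow> 4 \<Rightarrow> 4 \<Rightarrow> real" where
  "christoffel g x a b c = (1/2) * (\<Sum>d\<in>UNIV. ginv g x a d *
      (pd b (\<lambda>y. g y d c) x + pd c (\<lambda>y. g y d b) x - pd d (\<lambda>y. g y b c) x))"

definition riemann_up :: "(pt \<Rightarrow> 4 \<Rightarrow> 4 \<Rightarrow> real) \<Rightarrow> pt \<Rightarrow> 4 \<Rightarrow> 4 \<Rightarrow> 4 \<Rightarrow> 4 \<Rightarrow> real" where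
  "riemann_up g x a b c d =
     pd c (\<lambda>y. christoffel g y a d b) x - pd d (\<lambda>y. christoffel g y a c b) x
     + (\<Sum>e\<in>UNIV. christoffel g x a c e * christoffel g x e d b
                  - christoffel g x a d e * christoffel g x e c b)"

definition riemann :: "(pt \<Rightarrow> 4 \<Rightarrow> 4 \<Rightarrow> real) \<Rightarrow> pt \<Rightarrow> 4 \<Rightarrow> 4 \<Rightarrow> 4 \<Rightarrow> 4 \<Rightarrow> real" where
  "riemann g x a b c d = (\<Sum>e\<in>UNIV. g x a e * riemann_up g x e b c d)"

definition bel :: "(pt \<Rightarrow> 4 \<Rightarrow> 4 \<Rightarrow> real) \<Rightarrow> pt \<Rightarrow> 4 \<Rightarrow> 4 \<Rightarrow> 4 \<Rightarrow> 4 \<Rightarrow> real" where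
  "bel g x al be la mu =
     (let R = riemann g x; h = ginv g x in
       (\<Sum>r\<in>UNIV. \<Sum>s\<in>UNIV. \<Sum>r'\<in>UNIV. \<Sum>s'\<in>UNIV. h r r' * h s s' *
          (R al r la s * R be r' mu s' + R al r mu s * R be r' la s'))
     - (1/2) * g x al be * (\<Sum>r\<in>UNIV. \<Sum>t\<in>UNIV. \<Sum>s\<in>UNIV. \<Sum>r'\<in>UNIV. \<Sum>t'\<in>UNIV. \<Sum>s'\<in>UNIV.
          h r r' * h t t' * h s s' * R r t la s * R r' t' mu s')
     - (1/2) * g x la mu * (\<Sum>r\<in>UNIV. \<Sum>s\<in>UNIV. \<Sum>t\<in>UNIV. \<Sum>r'\<in>UNIV. \<Sum>s'\<in>UNIV. \<Sum>t'\<in>UNIV.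
          h r r' * h s s' * h t t' * R al r s t * R be r' s' t')
     + (1/8) * g x al be * g x la mu *
         (\<Sum>r\<in>UNIV. \<Sum>t\<in>UNIV. \<Sum>s\<in>UNIV. \<Sum>n\<in>UNIV. \<Sum>r'\<in>UNIV. \<Sum>t'\<in>UNIV. \<Sum>s'\<in>UNIV. \<Sum>n'\<in>UNIV.
          h r r' * h t t' * h s s' * h n n' * R r t s n * R r' t' s' n'))"

definition bel_current3 :: "(pt \<Rightarrow> 4 \<Rightarrow> 4 \<Rightarrow> real) \<Rightarrow> (pt \<Rightarrow> 4 \<Rightarrow> real) \<Rightarrow> (pt \<Rightarrow> 4 \<Rightarrow> real)
     \<Rightarrow> (pt \<Rightarrow> 4 \<Rightarrow> real) \<Rightarrow> pt \<Rightarrow> 4 \<Rightarrow> real" where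
  "bel_current3 g v1 v2 v3 x mu =
     (\<Sum>a\<in>UNIV. \<Sum>b\<in>UNIV. \<Sum>c\<in>UNIV.
        (1/6) * (bel g x a b c mu + bel g x a c b mu + bel g x b a c mu
               + bel g x b c a mu + bel g x c a b mu + bel g x c b a mu)
        * v1 x a * v2 x b * v3 x c)"

definition bel_current :: "(pt \<Rightarrow> 4 \<Rightarrow> 4 \<Rightarrow> real) \<Rightarrow> (pt \<Rightarrow> 4 \<Rightarrow> real) \<Rightarrow> pt \<Rightarrow> 4 \<Rightarrow> real" where
  "bel_current g v = bel_current3 g v v v"

definition lower :: "(pt \<Rightarrow> 4 \<Rightarrow> 4 \<Rightarrow> real) \<Rightarrow> (pt \<Rightarrow> 4 \<Rightarrow> real) \<Rightarrow> pt \<Rightarrow> 4 \<Rightarrow> real" where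
  "lower g v x a = (\<Sum>b\<in>UNIV. g x a b * v x b)"

definition cov_deriv_form :: "(pt \<Rightarrow> 4 \<Rightarrow> 4 \<Rightarrow> real) \<Rightarrow> (pt \<Rightarrow> 4 \<Rightarrow> real) \<Rightarrow> pt \<Rightarrow> 4 \<Rightarrow> 4 \<Rightarrow> real" where
  "cov_deriv_form g w x a b = pd a (\<lambda>y. w y b) x - (\<Sum>c\<in>UNIV. christoffel g x c a b * w x c)"

definition killing :: "pt set \<Rightarrow> (pt \<Rightarrow> 4 \<Rightarrow> 4 \<Rightarrow> real) \<Rightarrow> (pt \<Rightarrow> 4 \<Rightarrow> real) \<Rightarrow> bool" where
  "killing U g v \<longleftrightarrow> (\<forall>a. smooth_on U (\<lambda>x. v x a)) \<and>
     (\<forall>x\<in>U. \<forall>a b. cov_deriv_form g (lower g v) x a b + cov_deriv_form g (lower g v) x b a = 0)"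

definition ext_d :: "(pt \<Rightarrow> 4 \<Rightarrow> real) \<Rightarrow> pt \<Rightarrow> 4 \<Rightarrow> 4 \<Rightarrow> real" where
  "ext_d w x a b = pd a (\<lambda>y. w y b) x - pd b (\<lambda>y. w y a) x"

text \<open>Components of w wedge F for a 1-form w and a 2-form F (up to a nonzero constant).\<close>
definition wedge12 :: "(pt \<Rightarrow> 4 \<Rightarrow> real) \<Rightarrow> (pt \<Rightarrow> 4 \<Rightarrow> 4 \<Rightarrow> real) \<Rightarrow> pt \<Rightarrow> 4 \<Rightarrow> 4 \<Rightarrow> 4 \<Rightarrow> real" where
  "wedge12 w F x a b c = w x a * F x b c + w x b * F x c a + w x c * F x a b"

text \<open>Components of w wedge u for 1-forms (up to a nonzero constant).\<close>
definition wedge11 :: "(pt \<Rightarrow> 4 \<Rightarrow> real) \<Rightarrow> (pt \<Rightarrow> 4 \<Rightarrow> real) \<Rightarrow> pt \<Rightarrow> 4 \<Rightarrow> 4 \<Rightarrow> real" where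
  "wedge11 w u x a b = w x a * u x b - w x b * u x a"

end

theory Submission
  imports Defs
begin

text \<open>Let \<open>\<xi>\<close> also denote the Killing 1-form and \<open>F = \<nabla>\<xi>\<close>, which is antisymmetric.
  Hypersurface orthogonality says \<open>\<xi> \<and> F = 0\<close>, so wherever \<open>\<xi> \<noteq> 0\<close> we have \<open>F = \<xi> \<and> V\<close> and
  hence \<open>F \<and> F = 0\<close>.  Differentiating \<open>\<xi> \<and> F = 0\<close> and inserting the Killing identity
  \<open>\<nabla>\<^sub>d\<nabla>\<^sub>b\<xi>\<^sub>c = \<xi>\<^sup>e R\<^sub>e\<^sub>d\<^sub>b\<^sub>c\<close> yields \<open>\<xi> \<and> (\<xi> \<lrcorner> R)\<^sub>d = 0\<close> for every \<open>d\<close>, i.e.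
  \<open>\<xi> \<lrcorner> R = \<xi> \<and> W\<close>.  Substituting this into \<open>j\<^sub>m = B\<^sub>a\<^sub>b\<^sub>c\<^sub>m \<xi>\<^sup>a \<xi>\<^sup>b \<xi>\<^sup>c\<close>, every term either
  carries a factor \<open>\<xi>\<^sub>m\<close> or contracts \<open>\<xi>\<close> twice into an antisymmetric pair.  Where \<open>\<xi> = 0\<close>
  there is nothing to prove.\<close>

section \<open>Partial derivatives\<close>

lemma has_real_derivative_along_line:
  fixes f :: "pt \<Rightarrow> real"
  assumes "(f has_derivative f') (at (p + s *\<^sub>R v))"
  shows "((\<lambda>t. f (p + t *\<^sub>R v)) has_real_derivative f' v) (at s)"
proof -
  have line: "((\<lambda>t. p + t *\<^sub>R v) has_derivative (\<lambda>h. h *\<^sub>R v)) (at s)"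
    by (auto intro!: derivative_eq_intros)
  have "((\<lambda>t. f (p + t *\<^sub>R v)) has_derivative (\<lambda>h. f' (h *\<^sub>R v))) (at s)"
    using has_derivative_compose[OF line assms] by (simp add: o_def)
  moreover have "(\<lambda>h. f' (h *\<^sub>R v)) = (\<lambda>h. f' v * h)"
    using has_derivative_linear[OF assms] by (simp add: linear_scale mult.commute)
  ultimately show ?thesis by (simp add: has_field_derivative_def)
qed

lemma pd_eqI:
  "((\<lambda>t. f (x + t *\<^sub>R axis i 1)) has_real_derivative D) (at 0) \<Longrightarrow> pd i f x = D"
  unfolding pd_def by (rule DERIV_imp_deriv)

lemma pd_eq_derivative: "(f has_derivative f') (at x) \<Longrightarrow> pd i f x = f' (axis i 1)"
  using has_real_derivative_along_line[of f f' x 0] by (intro pd_eqI) simp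

lemma has_real_derivative_pd_along_line:
  assumes "f differentiable (at (p + s *\<^sub>R axis i 1))"
  shows "((\<lambda>t. f (p + t *\<^sub>R axis i 1)) has_real_derivative pd i f (p + s *\<^sub>R axis i 1)) (at s)"
proof -
  obtain f' where "(f has_derivative f') (at (p + s *\<^sub>R axis i 1))"
    using assms unfolding differentiable_def by blast
  then show ?thesis using has_real_derivative_along_line pd_eq_derivative by metis
qed

lemma has_real_derivative_pd:
  "f differentiable (at x) \<Longrightarrow> ((\<lambda>t. f (x + t *\<^sub>R axis i 1)) has_real_derivative pd i f x) (at 0)"
  using has_real_derivative_pd_along_line[of f x 0] by simp

lemma pd_const: "pd i (\<lambda>y. c) x = 0"
  by (rule pd_eqI) simp

lemma pd_add:
  "f differentiable (at x) \<Longrightarrow> h differentiable (at x) \<Longrightarrow>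
    pd i (\<lambda>y. f y + h y) x = pd i f x + pd i h x"
  by (intro pd_eqI DERIV_add has_real_derivative_pd)

lemma pd_diff:
  "f differentiable (at x) \<Longrightarrow> h differentiable (at x) \<Longrightarrow>
    pd i (\<lambda>y. f y - h y) x = pd i f x - pd i h x"
  by (intro pd_eqI DERIV_diff has_real_derivative_pd)

lemma pd_minus: "f differentiable (at x) \<Longrightarrow> pd i (\<lambda>y. - f y) x = - pd i f x"
  by (intro pd_eqI DERIV_minus has_real_derivative_pd)

lemma pd_cmult: "f differentiable (at x) \<Longrightarrow> pd i (\<lambda>y. c * f y) x = c * pd i f x"
  by (intro pd_eqI DERIV_cmult has_real_derivative_pd)

lemma pd_mult:
  assumes "f differentiable (at x)" "h differentiable (at x)"
  shows "pd i (\<lambda>y. f y * h y) x = pd i f x * h x + f x * pd i h x"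
proof -
  have "((\<lambda>t. f (x + t *\<^sub>R axis i 1) * h (x + t *\<^sub>R axis i 1)) has_real_derivative
      pd i f x * h (x + 0 *\<^sub>R axis i 1) + pd i h x * f (x + 0 *\<^sub>R axis i 1)) (at 0)"
    by (intro DERIV_mult has_real_derivative_pd assms)
  then show ?thesis by (intro pd_eqI) (simp add: algebra_simps)
qed

lemma pd_sum:
  "finite S \<Longrightarrow> (\<And>k. k \<in> S \<Longrightarrow> f k differentiable (at x)) \<Longrightarrow>
    pd i (\<lambda>y. \<Sum>k\<in>S. f k y) x = (\<Sum>k\<in>S. pd i (f k) x)"
  by (intro pd_eqI DERIV_sum has_real_derivative_pd)

lemma pd_cong_open:
  assumes "open U" "x \<in> U" "\<And>y. y \<in> U \<Longrightarrow> f y = h y"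
  shows "pd i f x = pd i h x"
  unfolding pd_def
proof (rule deriv_cong_ev)
  obtain r where r: "r > 0" "ball x r \<subseteq> U" using assms(1,2) open_contains_ball by blast
  have "\<forall>\<^sub>F t in nhds 0. x + t *\<^sub>R axis i 1 \<in> U"
    unfolding eventually_nhds_metric using r by (intro exI[of _ r]) (auto simp: dist_norm)
  then show "\<forall>\<^sub>F t in nhds 0. f (x + t *\<^sub>R axis i 1) = h (x + t *\<^sub>R axis i 1)"
    by eventually_elim (simp add: assms)
qed simp

lemma differentiable_cong_open:
  assumes "open U" "x \<in> U" "\<And>y. y \<in> U \<Longrightarrow> f y = h y" "h differentiable (at x)"
  shows "f differentiable (at x)"
proof -
  obtain h' where "(h has_derivative h') (at x)" using assms(4) unfolding differentiable_def by blast
  then have "(f has_derivative h') (at x)"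
    by (rule has_derivative_transform_within_open[where s=U]) (use assms in auto)
  then show ?thesis unfolding differentiable_def by blast
qed

section \<open>Symmetry of second partial derivatives\<close>

definition second_difference :: "(pt \<Rightarrow> real) \<Rightarrow> pt \<Rightarrow> 4 \<Rightarrow> 4 \<Rightarrow> real \<Rightarrow> real" where
  "second_difference f x i j t =
     f (x + t *\<^sub>R axis i 1 + t *\<^sub>R axis j 1) - f (x + t *\<^sub>R axis i 1) - f (x + t *\<^sub>R axis j 1) + f x"

lemma second_difference_commute: "second_difference f x i j t = second_difference f x j i t"
  unfolding second_difference_def by (simp add: add_ac)

lemma second_difference_mean_value:
  assumes U: "ball x r \<subseteq> U" "\<And>y. y \<in> U \<Longrightarrow> f differentiable (at y)" and t: "0 < t" "2 * t < r"
  obtains z where "0 < z" "z < t" "second_difference f x j i t =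
    t * (pd i f (x + t *\<^sub>R axis j 1 + z *\<^sub>R axis i 1) - pd i f (x + z *\<^sub>R axis i 1))"
proof -
  define psi where "psi s = f (x + t *\<^sub>R axis j 1 + s *\<^sub>R axis i 1) - f (x + s *\<^sub>R axis i 1)" for s
  define dpsi where "dpsi s = pd i f (x + t *\<^sub>R axis j 1 + s *\<^sub>R axis i 1) - pd i f (x + s *\<^sub>R axis i 1)" for s
  have "DERIV psi s :> dpsi s" if "0 \<le> s" "s \<le> t" for s
  proof -
    have dist_shift: "dist x (x + v) = norm v" for v :: pt
      by (simp add: dist_norm)
    have "norm (t *\<^sub>R axis j 1 + s *\<^sub>R axis i (1::real)) \<le> t + s"
      using norm_triangle_ineq[of "t *\<^sub>R axis j (1::real)" "s *\<^sub>R axis i 1"] that t by simp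
    moreover have "norm (s *\<^sub>R axis i (1::real)) = s"
      using that by simp
    ultimately have "x + t *\<^sub>R axis j 1 + s *\<^sub>R axis i 1 \<in> ball x r" "x + s *\<^sub>R axis i 1 \<in> ball x r"
      using that t by (simp_all only: mem_ball dist_shift add.assoc)
    then have "x + t *\<^sub>R axis j 1 + s *\<^sub>R axis i 1 \<in> U" "x + s *\<^sub>R axis i 1 \<in> U"
      using U(1) by auto
    then show ?thesis
      unfolding psi_def dpsi_def by (intro DERIV_diff has_real_derivative_pd_along_line U(2))
  qed
  then obtain z where "0 < z" "z < t" "psi t - psi 0 = (t - 0) * dpsi z"
    using MVT2[of 0 t psi dpsi] t by blast
  moreover have "psi t - psi 0 = second_difference f x j i t"
    unfolding psi_def second_difference_def by simp
  ultimately show ?thesis using that unfolding dpsi_def by simp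
qed

lemma second_difference_approx:
  assumes U: "open U" "x \<in> U" "\<And>y. y \<in> U \<Longrightarrow> f differentiable (at y)"
    and G: "(pd i f has_derivative G') (at x)" and e: "e > 0"
  shows "\<forall>\<^sub>F t in at_right 0. \<bar>second_difference f x j i t - t\<^sup>2 * G' (axis j 1)\<bar> \<le> 3 * e * t\<^sup>2"
proof -
  obtain d where d: "d > 0"
    "\<And>y. norm (y - x) < d \<Longrightarrow> \<bar>pd i f y - pd i f x - G' (y - x)\<bar> \<le> e * norm (y - x)"
    using G e unfolding has_derivative_at_alt by (metis real_norm_def)
  obtain r where r: "r > 0" "ball x r \<subseteq> U" using U(1,2) open_contains_ball by blast
  have "\<bar>second_difference f x j i t - t\<^sup>2 * G' (axis j 1)\<bar> \<le> 3 * e * t\<^sup>2"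
    if t: "0 < t" "2 * t < min d r" for t
  proof -
    obtain z where z: "0 < z" "z < t" and mvt: "second_difference f x j i t =
        t * (pd i f (x + t *\<^sub>R axis j 1 + z *\<^sub>R axis i 1) - pd i f (x + z *\<^sub>R axis i 1))"
      using second_difference_mean_value[OF r(2) U(3) t(1)] t(2) by auto
    define a where "a = x + t *\<^sub>R axis j 1 + z *\<^sub>R axis i 1"
    define b where "b = x + z *\<^sub>R axis i 1"
    have "norm (a - x) \<le> t + z"
      unfolding a_def using norm_triangle_ineq[of "t *\<^sub>R axis j (1::real)" "z *\<^sub>R axis i 1"] t z
      by (simp add: add.assoc)
    then have "\<bar>pd i f a - pd i f x - G' (a - x)\<bar> \<le> e * (t + z)"
      using d(2)[of a] t z e by (smt (verit) mult_left_mono min_less_iff_conj)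
    moreover have "\<bar>pd i f b - pd i f x - G' (b - x)\<bar> \<le> e * z"
      using d(2)[of b] t z by (simp add: b_def)
    moreover have "G' (a - x) - G' (b - x) = t * G' (axis j 1)"
      using has_derivative_linear[OF G] by (simp add: a_def b_def linear_add linear_scale)
    ultimately have "\<bar>pd i f a - pd i f b - t * G' (axis j 1)\<bar> \<le> e * (t + z) + e * z"
      by linarith
    also have "\<dots> \<le> 3 * e * t" using z e by (simp add: algebra_simps)
    finally have "t * \<bar>pd i f a - pd i f b - t * G' (axis j 1)\<bar> \<le> 3 * e * t\<^sup>2"
      using t by (simp add: mult_left_mono power2_eq_square)
    moreover have "second_difference f x j i t - t\<^sup>2 * G' (axis j 1) = t * (pd i f a - pd i f b - t * G' (axis j 1))"
      unfolding mvt a_def b_def by (simp add: power2_eq_square algebra_simps)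
    ultimately show ?thesis using t by (simp add: abs_mult)
  qed
  moreover have "min d r / 2 > 0" using d r by simp
  ultimately show ?thesis
    using eventually_at_right_real[of 0 "min d r / 2"] by (auto elim!: eventually_mono)
qed

lemma second_difference_tendsto:
  assumes "open U" "x \<in> U" "\<And>y. y \<in> U \<Longrightarrow> f differentiable (at y)"
    and "(pd i f has_derivative G') (at x)"
  shows "((\<lambda>t. second_difference f x j i t / t\<^sup>2) \<longlongrightarrow> G' (axis j 1)) (at_right 0)"
proof (rule tendstoI)
  fix e :: real assume "e > 0"
  then have "\<forall>\<^sub>F t in at_right 0. \<bar>second_difference f x j i t - t\<^sup>2 * G' (axis j 1)\<bar> \<le> 3 * (e / 4) * t\<^sup>2"
    using assms by (intro second_difference_approx) simp_all
  with eventually_at_right_less show "\<forall>\<^sub>F t in at_right 0. dist (second_difference f x j i t / t\<^sup>2) (G' (axis j 1)) < e"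
  proof eventually_elim
    case (elim t)
    then have "\<bar>second_difference f x j i t / t\<^sup>2 - G' (axis j 1)\<bar> \<le> 3 * (e / 4)"
      by (simp add: field_simps abs_divide)
    then show ?case using \<open>e > 0\<close> by (simp add: dist_real_def)
  qed
qed

theorem pd_commute:
  assumes "open U" "x \<in> U" "\<And>y. y \<in> U \<Longrightarrow> f differentiable (at y)"
    and "pd i f differentiable (at x)" "pd j f differentiable (at x)"
  shows "pd j (pd i f) x = pd i (pd j f) x"
proof -
  obtain Gi Gj where Gi: "(pd i f has_derivative Gi) (at x)" and Gj: "(pd j f has_derivative Gj) (at x)"
    using assms(4,5) unfolding differentiable_def by blast
  have "((\<lambda>t. second_difference f x j i t / t\<^sup>2) \<longlongrightarrow> pd j (pd i f) x) (at_right 0)"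
    using second_difference_tendsto[OF assms(1-3) Gi] by (simp add: pd_eq_derivative[OF Gi])
  moreover have "((\<lambda>t. second_difference f x j i t / t\<^sup>2) \<longlongrightarrow> pd i (pd j f) x) (at_right 0)"
    using second_difference_tendsto[OF assms(1-3) Gj, of i]
    by (simp add: pd_eq_derivative[OF Gj] second_difference_commute[of f x i j])
  ultimately show ?thesis by (rule tendsto_unique[rotated]) simp
qed

lemma differentiable_prod:
  fixes f :: "'i \<Rightarrow> 'a::real_normed_vector \<Rightarrow> 'b::real_normed_field"
  assumes "\<And>i. i \<in> I \<Longrightarrow> f i differentiable (at x)"
  shows "(\<lambda>y. \<Prod>i\<in>I. f i y) differentiable (at x)"
proof -
  obtain f' where "\<And>i. i \<in> I \<Longrightarrow> (f i has_derivative f' i) (at x)"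
    using assms unfolding differentiable_def by metis
  then show ?thesis unfolding differentiable_def using has_derivative_prod by blast
qed

lemma differentiable_det:
  fixes M :: "'a::real_normed_vector \<Rightarrow> real^'n^'n"
  assumes "\<And>a b. (\<lambda>y. M y $ a $ b) differentiable (at x)"
  shows "(\<lambda>y. det (M y)) differentiable (at x)"
  unfolding det_def
  by (intro differentiable_sum ballI differentiable_mult differentiable_const differentiable_prod assms) simp

lemma invertible_matrix_inv:
  assumes "invertible (A::'a::semiring_1^'n^'n)"
  shows "A ** matrix_inv A = mat 1" "matrix_inv A ** A = mat 1"
  using someI_ex[OF assms[unfolded invertible_def]] unfolding matrix_inv_def by auto

lemma lorentzian_matrix_det_nonzero: "lorentzian_matrix G \<Longrightarrow> det G \<noteq> 0"
proof -
  assume "lorentzian_matrix G"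
  then obtain P :: "real^4^4"
    where P: "transpose P ** G ** P = (\<chi> i j. if i = j then (if i = 0 then -1 else 1) else 0)"
    unfolding lorentzian_matrix_def by blast
  have "det (transpose P ** G ** P) = det P * det G * det P" by (simp add: det_mul)
  moreover have "det ((\<chi> i j. if i = j then (if i = 0 then -1 else 1) else 0) :: real^4^4) \<noteq> 0"
    by (subst det_diagonal) auto
  ultimately show ?thesis using P by auto
qed

lemma matrix_inv_cramer:
  assumes "det (A::real^'n^'n) \<noteq> 0"
  shows "matrix_inv A $ k $ j = det (\<chi> a b. if b = k then axis j 1 $ a else A $ a $ b) / det A"
proof -
  have "A *v (matrix_inv A *v axis j 1) = axis j 1"
    using invertible_matrix_inv(1) assms invertible_det_nz by (metis matrix_vector_mul_assoc matrix_vector_mul_lid)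
  then have "matrix_inv A *v axis j 1 = (\<chi> k. det (\<chi> a b. if b = k then axis j 1 $ a else A $ a $ b) / det A)"
    using cramer[OF assms] by blast
  then show ?thesis by (simp add: matrix_vector_mult_basis column_def fun_eq_iff)
qed

lemma sum_kronecker_delta: "(\<Sum>d\<in>UNIV. (if (a::'a::finite) = d then 1 else 0) * X d) = (X a :: real)"
proof -
  have "(\<Sum>d\<in>UNIV. (if a = d then 1 else 0) * X d) = (\<Sum>d\<in>UNIV. if a = d then X d else 0)"
    by (intro sum.cong) auto
  then show ?thesis by simp
qed

lemma wedge_eq_zero_decompose:
  fixes L :: "'n \<Rightarrow> real" and F :: "'n \<Rightarrow> 'n \<Rightarrow> real"
  assumes wedge: "\<And>a b c. L a * F b c + L b * F c a + L c * F a b = 0"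
    and antisym: "\<And>a b. F a b = - F b a" and "L i \<noteq> 0"
  shows "F b c = L b * (F i c / L i) - L c * (F i b / L i)"
proof -
  have "L i * F b c = L b * F i c - L c * F i b"
    using wedge[of i b c] antisym[of c i] by (simp add: algebra_simps)
  then show ?thesis using \<open>L i \<noteq> 0\<close> by (simp add: field_simps)
qed

lemma sum_antisym_zero:
  assumes "\<And>a b. f a b = - f b a"
  shows "(\<Sum>a\<in>UNIV. \<Sum>b\<in>UNIV. X a * X b * f a b) = (0::real)"
proof -
  have "(\<Sum>a\<in>UNIV. \<Sum>b\<in>UNIV. X a * X b * f a b) = (\<Sum>b\<in>UNIV. \<Sum>a\<in>UNIV. X a * X b * f a b)"
    by (rule sum.swap)
  also have "\<dots> = (\<Sum>b\<in>UNIV. \<Sum>a\<in>UNIV. - (X b * X a * f b a))"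
    by (intro sum.cong refl) (subst assms, simp)
  also have "\<dots> = - (\<Sum>b\<in>UNIV. \<Sum>a\<in>UNIV. X b * X a * f b a)"
    by (simp add: sum_negf)
  finally show ?thesis by simp
qed

lemma sum_rotate3: "(\<Sum>a\<in>UNIV. \<Sum>b\<in>UNIV. \<Sum>c\<in>UNIV. f a b c) = (\<Sum>b\<in>UNIV. \<Sum>c\<in>UNIV. \<Sum>a\<in>UNIV. (f a b c::'a::comm_monoid_add))"
  by (subst sum.swap) (rule sum.cong[OF refl], rule sum.swap)

lemma sum_rotate4: "(\<Sum>a\<in>UNIV. \<Sum>b\<in>UNIV. \<Sum>c\<in>UNIV. \<Sum>d\<in>UNIV. f a b c d) =
   (\<Sum>b\<in>UNIV. \<Sum>c\<in>UNIV. \<Sum>d\<in>UNIV. \<Sum>a\<in>UNIV. (f a b c d::'a::comm_monoid_add))"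
  by (subst sum.swap) (rule sum.cong[OF refl], rule sum_rotate3)

lemma sum_rotate5: "(\<Sum>a\<in>UNIV. \<Sum>b\<in>UNIV. \<Sum>c\<in>UNIV. \<Sum>d\<in>UNIV. \<Sum>e\<in>UNIV. f a b c d e) =
   (\<Sum>b\<in>UNIV. \<Sum>c\<in>UNIV. \<Sum>d\<in>UNIV. \<Sum>e\<in>UNIV. \<Sum>a\<in>UNIV. (f a b c d e::'a::comm_monoid_add))"
  by (subst sum.swap) (rule sum.cong[OF refl], rule sum_rotate4)

lemma sum_rotate6: "(\<Sum>a\<in>UNIV. \<Sum>b\<in>UNIV. \<Sum>c\<in>UNIV. \<Sum>d\<in>UNIV. \<Sum>e\<in>UNIV. \<Sum>k\<in>UNIV. f a b c d e k) =
   (\<Sum>b\<in>UNIV. \<Sum>c\<in>UNIV. \<Sum>d\<in>UNIV. \<Sum>e\<in>UNIV. \<Sum>k\<in>UNIV. \<Sum>a\<in>UNIV. (f a b c d e k::'a::comm_monoid_add))"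
  by (subst sum.swap) (rule sum.cong[OF refl], rule sum_rotate5)

lemma sum_rotate7: "(\<Sum>a\<in>UNIV. \<Sum>b\<in>UNIV. \<Sum>c\<in>UNIV. \<Sum>d\<in>UNIV. \<Sum>e\<in>UNIV. \<Sum>k\<in>UNIV. \<Sum>l\<in>UNIV. f a b c d e k l) =
   (\<Sum>b\<in>UNIV. \<Sum>c\<in>UNIV. \<Sum>d\<in>UNIV. \<Sum>e\<in>UNIV. \<Sum>k\<in>UNIV. \<Sum>l\<in>UNIV. \<Sum>a\<in>UNIV. (f a b c d e k l::'a::comm_monoid_add))"
  by (subst sum.swap) (rule sum.cong[OF refl], rule sum_rotate6)

lemma sum3_mult_separate: "(\<Sum>a\<in>UNIV. \<Sum>b\<in>UNIV. \<Sum>c\<in>UNIV. k * f a b * h c) = k * (\<Sum>a\<in>UNIV. \<Sum>b\<in>UNIV. f a b) * (\<Sum>c\<in>UNIV. (h c::'a::comm_semiring_0))"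
  by (simp add: sum_distrib_left sum_distrib_right mult_ac)

lemma sum3_perm_acb: "(\<Sum>a\<in>UNIV. \<Sum>b\<in>UNIV. \<Sum>c\<in>UNIV. f a c b) = (\<Sum>a\<in>UNIV. \<Sum>b\<in>UNIV. \<Sum>c\<in>UNIV. (f a b c::'a::comm_monoid_add))"
  by (rule sum.cong[OF refl], rule sum.swap)

lemma sum3_perm_bac: "(\<Sum>a\<in>UNIV. \<Sum>b\<in>UNIV. \<Sum>c\<in>UNIV. f b a c) = (\<Sum>a\<in>UNIV. \<Sum>b\<in>UNIV. \<Sum>c\<in>UNIV. (f a b c::'a::comm_monoid_add))"
  by (rule sum.swap)

lemma sum3_perm_bca: "(\<Sum>a\<in>UNIV. \<Sum>b\<in>UNIV. \<Sum>c\<in>UNIV. f b c a) = (\<Sum>a\<in>UNIV. \<Sum>b\<in>UNIV. \<Sum>c\<in>UNIV. (f a b c::'a::comm_monoid_add))"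
  by (rule sum_rotate3)

lemma sum3_perm_cab: "(\<Sum>a\<in>UNIV. \<Sum>b\<in>UNIV. \<Sum>c\<in>UNIV. f c a b) = (\<Sum>a\<in>UNIV. \<Sum>b\<in>UNIV. \<Sum>c\<in>UNIV. (f a b c::'a::comm_monoid_add))"
  by (subst sum_rotate3, subst sum_rotate3, rule refl)

lemma sum3_perm_cba: "(\<Sum>a\<in>UNIV. \<Sum>b\<in>UNIV. \<Sum>c\<in>UNIV. f c b a) = (\<Sum>a\<in>UNIV. \<Sum>b\<in>UNIV. \<Sum>c\<in>UNIV. (f a b c::'a::comm_monoid_add))"
  by (subst sum_rotate3, subst sum.swap, rule refl)

lemma sum3_symmetrize:
  fixes B :: "'n::finite \<Rightarrow> 'n \<Rightarrow> 'n \<Rightarrow> real"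
  shows "(\<Sum>a\<in>UNIV. \<Sum>b\<in>UNIV. \<Sum>c\<in>UNIV. (1/6) * (B a b c + B a c b + B b a c + B b c a + B c a b + B c b a)
     * X a * X b * X c) = (\<Sum>a\<in>UNIV. \<Sum>b\<in>UNIV. \<Sum>c\<in>UNIV. B a b c * X a * X b * X c)"
proof -
  define S where "S = (\<Sum>a\<in>UNIV. \<Sum>b\<in>UNIV. \<Sum>c\<in>UNIV. B a b c * X a * X b * X c)"
  define F where "F a b c = B a b c * X a * X b * X c" for a b c
  have 1: "(\<Sum>a\<in>UNIV. \<Sum>b\<in>UNIV. \<Sum>c\<in>UNIV. B a c b * X a * X b * X c) = S"
    using sum3_perm_acb[of F] unfolding F_def S_def by (simp add: mult_ac)
  have 2: "(\<Sum>a\<in>UNIV. \<Sum>b\<in>UNIV. \<Sum>c\<in>UNIV. B b a c * X a * X b * X c) = S"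
    using sum3_perm_bac[of F] unfolding F_def S_def by (simp add: mult_ac)
  have 3: "(\<Sum>a\<in>UNIV. \<Sum>b\<in>UNIV. \<Sum>c\<in>UNIV. B b c a * X a * X b * X c) = S"
    using sum3_perm_bca[of F] unfolding F_def S_def by (simp add: mult_ac)
  have 4: "(\<Sum>a\<in>UNIV. \<Sum>b\<in>UNIV. \<Sum>c\<in>UNIV. B c a b * X a * X b * X c) = S"
    using sum3_perm_cab[of F] unfolding F_def S_def by (simp add: mult_ac)
  have 5: "(\<Sum>a\<in>UNIV. \<Sum>b\<in>UNIV. \<Sum>c\<in>UNIV. B c b a * X a * X b * X c) = S"
    using sum3_perm_cba[of F] unfolding F_def S_def by (simp add: mult_ac)
  have "(\<Sum>a\<in>UNIV. \<Sum>b\<in>UNIV. \<Sum>c\<in>UNIV. (1/6) * (B a b c + B a c b + B b a c + B b c a + B c a b + B c b a)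
     * X a * X b * X c) = (1/6) * (S + (\<Sum>a\<in>UNIV. \<Sum>b\<in>UNIV. \<Sum>c\<in>UNIV. B a c b * X a * X b * X c)
       + (\<Sum>a\<in>UNIV. \<Sum>b\<in>UNIV. \<Sum>c\<in>UNIV. B b a c * X a * X b * X c)
       + (\<Sum>a\<in>UNIV. \<Sum>b\<in>UNIV. \<Sum>c\<in>UNIV. B b c a * X a * X b * X c)
       + (\<Sum>a\<in>UNIV. \<Sum>b\<in>UNIV. \<Sum>c\<in>UNIV. B c a b * X a * X b * X c)
       + (\<Sum>a\<in>UNIV. \<Sum>b\<in>UNIV. \<Sum>c\<in>UNIV. B c b a * X a * X b * X c))"
    unfolding S_def by (simp add: sum.distrib sum_distrib_left algebra_simps)
  also have "\<dots> = S" unfolding 1 2 3 4 5 by simp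
  finally show ?thesis unfolding S_def .
qed

section \<open>Metric, connection and curvature in a chart\<close>

lemma smooth_on_iter_pd_differentiable:
  "smooth_on U f \<Longrightarrow> open U \<Longrightarrow> y \<in> U \<Longrightarrow> iter_pd is f differentiable (at y)"
  unfolding smooth_on_def by (simp add: differentiable_on_eq_differentiable_at)

locale chart =
  fixes U :: "pt set" and g :: "pt \<Rightarrow> 4 \<Rightarrow> 4 \<Rightarrow> real"
  assumes spacetime: "spacetime_chart U g"
begin

lemma open_U: "open U" using spacetime unfolding spacetime_chart_def by blast

lemma metric_sym:
  assumes y: "y \<in> U"
  shows "g y a b = g y b a"
proof -
  have "transpose (metric_matrix g y) = metric_matrix g y"
    using spacetime y unfolding spacetime_chart_def lorentzian_matrix_def by blast
  then have "transpose (metric_matrix g y) $ b $ a = metric_matrix g y $ b $ a" by simp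
  then show ?thesis by (simp add: transpose_def metric_matrix_def)
qed

lemma pd_metric_sym: "y \<in> U \<Longrightarrow> pd i (\<lambda>z. g z a b) y = pd i (\<lambda>z. g z b a) y"
  by (rule pd_cong_open[OF open_U]) (auto simp: metric_sym)

lemma metric_differentiable: "y \<in> U \<Longrightarrow> (\<lambda>z. g z a b) differentiable (at y)"
  using spacetime smooth_on_iter_pd_differentiable[OF _ open_U, of _ y "[]"]
  unfolding spacetime_chart_def by simp

lemma pd_metric_differentiable: "y \<in> U \<Longrightarrow> pd i (\<lambda>z. g z a b) differentiable (at y)"
  using spacetime smooth_on_iter_pd_differentiable[OF _ open_U, of _ y "[i]"]
  unfolding spacetime_chart_def by simp

lemma pd_metric_commute: "y \<in> U \<Longrightarrow> pd j (pd i (\<lambda>z. g z a b)) y = pd i (pd j (\<lambda>z. g z a b)) y"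
  by (rule pd_commute[OF open_U]) (auto intro: metric_differentiable pd_metric_differentiable)

lemma det_metric_nonzero: "y \<in> U \<Longrightarrow> det (metric_matrix g y) \<noteq> 0"
  using spacetime lorentzian_matrix_det_nonzero unfolding spacetime_chart_def by blast

lemma metric_ginv:
  assumes y: "y \<in> U"
  shows "(\<Sum>b\<in>UNIV. g y a b * ginv g y b c) = (if a = c then 1 else 0)"
proof -
  have "metric_matrix g y ** matrix_inv (metric_matrix g y) = mat 1"
    using invertible_matrix_inv(1) det_metric_nonzero[OF y] invertible_det_nz by blast
  then have "(metric_matrix g y ** matrix_inv (metric_matrix g y)) $ a $ c = mat 1 $ a $ c" by simp
  then show ?thesis by (simp add: matrix_matrix_mult_def mat_def metric_matrix_def ginv_def)
qed

lemma ginv_metric: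
  assumes y: "y \<in> U"
  shows "(\<Sum>b\<in>UNIV. ginv g y a b * g y b c) = (if a = c then 1 else 0)"
proof -
  have "matrix_inv (metric_matrix g y) ** metric_matrix g y = mat 1"
    using invertible_matrix_inv(2) det_metric_nonzero[OF y] invertible_det_nz by blast
  then have "(matrix_inv (metric_matrix g y) ** metric_matrix g y) $ a $ c = mat 1 $ a $ c" by simp
  then show ?thesis by (simp add: matrix_matrix_mult_def mat_def metric_matrix_def ginv_def)
qed

lemma ginv_sym:
  assumes y: "y \<in> U"
  shows "ginv g y a b = ginv g y b a"
proof -
  define G where "G = metric_matrix g y"
  define H where "H = matrix_inv G"
  have inv: "invertible G" using det_metric_nonzero[OF y] invertible_det_nz G_def by blast
  have tG: "transpose G = G" using spacetime y unfolding spacetime_chart_def lorentzian_matrix_def G_def by blast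
  have "G ** transpose H = mat 1"
    using invertible_matrix_inv(2)[OF inv] tG by (metis H_def matrix_transpose_mul transpose_mat)
  then have "transpose H = H"
    using invertible_matrix_inv(2)[OF inv] by (metis H_def matrix_mul_assoc matrix_mul_lid matrix_mul_rid)
  then have "transpose H $ b $ a = H $ b $ a" by simp
  then show ?thesis unfolding ginv_def G_def[symmetric] H_def[symmetric]
    by (simp add: transpose_def)
qed

lemma ginv_differentiable:
  assumes y: "y \<in> U"
  shows "(\<lambda>z. ginv g z a b) differentiable (at y)"
proof (rule differentiable_cong_open[OF open_U y])
  define M where "M z = (\<chi> p q. if q = a then axis b 1 $ p else metric_matrix g z $ p $ q)" for z
  show "ginv g z a b = det (M z) / det (metric_matrix g z)" if "z \<in> U" for z
    unfolding ginv_def M_def using matrix_inv_cramer det_metric_nonzero that by blast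
  have "(\<lambda>z. M z $ p $ q) differentiable (at y)" for p q
    by (cases "q = a") (auto simp: M_def metric_matrix_def metric_differentiable[OF y])
  then show "(\<lambda>z. det (M z) / det (metric_matrix g z)) differentiable (at y)"
    using det_metric_nonzero[OF y]
    by (intro differentiable_divide differentiable_det) (auto simp: metric_matrix_def metric_differentiable[OF y])
qed

lemma christoffel_sym:
  assumes y: "y \<in> U"
  shows "christoffel g y a b c = christoffel g y a c b"
proof -
  have "\<And>d. pd d (\<lambda>z. g z c b) y = pd d (\<lambda>z. g z b c) y" by (rule pd_metric_sym[OF y])
  then show ?thesis unfolding christoffel_def by (simp add: algebra_simps)
qed

lemma christoffel_differentiable: "y \<in> U \<Longrightarrow> (\<lambda>z. christoffel g z a b c) differentiable (at y)"
  unfolding christoffel_def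
  by (intro differentiable_mult differentiable_const differentiable_sum ballI differentiable_add differentiable_diff
      ginv_differentiable pd_metric_differentiable) auto

definition christoffel_low :: "pt \<Rightarrow> 4 \<Rightarrow> 4 \<Rightarrow> 4 \<Rightarrow> real" where "christoffel_low y a b c = (\<Sum>e\<in>UNIV. g y a e * christoffel g y e b c)"

lemma christoffel_low_eq:
  assumes y: "y \<in> U"
  shows "christoffel_low y a b c =
   1/2 * (pd b (\<lambda>z. g z a c) y + pd c (\<lambda>z. g z a b) y - pd a (\<lambda>z. g z b c) y)"
proof -
  define X where "X d = pd b (\<lambda>z. g z d c) y + pd c (\<lambda>z. g z d b) y - pd d (\<lambda>z. g z b c) y" for d
  have "christoffel_low y a b c = (\<Sum>e\<in>UNIV. \<Sum>d\<in>UNIV. 1/2 * (g y a e * ginv g y e d * X d))"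
    unfolding christoffel_low_def christoffel_def X_def by (simp add: sum_distrib_left mult_ac)
  also have "\<dots> = (\<Sum>d\<in>UNIV. \<Sum>e\<in>UNIV. 1/2 * (g y a e * ginv g y e d * X d))"
    by (rule sum.swap)
  also have "\<dots> = (\<Sum>d\<in>UNIV. (\<Sum>e\<in>UNIV. g y a e * ginv g y e d) * (1/2 * X d))"
    by (simp add: sum_distrib_left sum_distrib_right mult_ac)
  also have "\<dots> = 1/2 * X a" by (simp only: metric_ginv[OF y] sum_kronecker_delta)
  finally show ?thesis unfolding X_def .
qed

lemma christoffel_raise:
  assumes y: "y \<in> U"
  shows "christoffel g y e b c = (\<Sum>f\<in>UNIV. ginv g y e f * christoffel_low y f b c)"
proof -
  have "(\<Sum>f\<in>UNIV. ginv g y e f * christoffel_low y f b c) = (\<Sum>f\<in>UNIV. \<Sum>k\<in>UNIV. ginv g y e f * g y f k * christoffel g y k b c)"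
    unfolding christoffel_low_def by (simp add: sum_distrib_left mult_ac)
  also have "\<dots> = (\<Sum>k\<in>UNIV. \<Sum>f\<in>UNIV. ginv g y e f * g y f k * christoffel g y k b c)"
    by (rule sum.swap)
  also have "\<dots> = (\<Sum>k\<in>UNIV. (\<Sum>f\<in>UNIV. ginv g y e f * g y f k) * christoffel g y k b c)"
    by (simp add: sum_distrib_right)
  also have "\<dots> = christoffel g y e b c" by (simp add: ginv_metric[OF y] sum_kronecker_delta)
  finally show ?thesis by simp
qed

lemma christoffel_contract_commute:
  assumes y: "y \<in> U"
  shows "(\<Sum>e\<in>UNIV. christoffel_low y e p q * christoffel g y e r s) = (\<Sum>e\<in>UNIV. christoffel_low y e r s * christoffel g y e p q)"
proof -
  have "(\<Sum>e\<in>UNIV. christoffel_low y e p q * christoffel g y e r s) = (\<Sum>e\<in>UNIV. \<Sum>f\<in>UNIV. christoffel_low y e p q * ginv g y e f * christoffel_low y f r s)"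
    by (simp add: christoffel_raise[OF y] sum_distrib_left mult_ac)
  also have "\<dots> = (\<Sum>f\<in>UNIV. \<Sum>e\<in>UNIV. christoffel_low y e p q * ginv g y e f * christoffel_low y f r s)"
    by (rule sum.swap)
  also have "\<dots> = (\<Sum>f\<in>UNIV. christoffel_low y f r s * (\<Sum>e\<in>UNIV. ginv g y f e * christoffel_low y e p q))"
    by (simp add: sum_distrib_left mult_ac ginv_sym[OF y])
  also have "\<dots> = (\<Sum>f\<in>UNIV. christoffel_low y f r s * christoffel g y f p q)"
    by (simp add: christoffel_raise[OF y])
  finally show ?thesis .
qed

lemma pd_metric_eq: "y \<in> U \<Longrightarrow> pd c (\<lambda>z. g z a e) y = christoffel_low y a c e + christoffel_low y e c a"
  using pd_metric_sym[of y e a c] pd_metric_sym[of y a c e] pd_metric_sym[of y c e a]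
  by (simp add: christoffel_low_eq algebra_simps)

abbreviation "ddg y c d a b \<equiv> pd c (pd d (\<lambda>z. g z a b)) y"

lemma metric_pd_christoffel:
  assumes x: "x \<in> U"
  shows "(\<Sum>e\<in>UNIV. g x a e * pd c (\<lambda>z. christoffel g z e d b) x) =
   pd c (\<lambda>z. christoffel_low z a d b) x - (\<Sum>e\<in>UNIV. pd c (\<lambda>z. g z a e) x * christoffel g x e d b)"
proof -
  have "pd c (\<lambda>z. christoffel_low z a d b) x = (\<Sum>e\<in>UNIV. pd c (\<lambda>z. g z a e * christoffel g z e d b) x)"
    unfolding christoffel_low_def by (rule pd_sum) (auto intro!: differentiable_mult metric_differentiable christoffel_differentiable x)
  also have "\<dots> = (\<Sum>e\<in>UNIV. pd c (\<lambda>z. g z a e) x * christoffel g x e d b + g x a e * pd c (\<lambda>z. christoffel g z e d b) x)"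
    by (intro sum.cong refl pd_mult metric_differentiable christoffel_differentiable x)
  finally show ?thesis by (simp add: sum.distrib)
qed

lemma pd_christoffel_low:
  assumes x: "x \<in> U"
  shows "pd c (\<lambda>z. christoffel_low z a d b) x = 1/2 * (ddg x c d a b + ddg x c b a d - ddg x c a d b)"
proof -
  have "pd c (\<lambda>z. christoffel_low z a d b) x = pd c (\<lambda>z. 1/2 * (pd d (\<lambda>z. g z a b) z + pd b (\<lambda>z. g z a d) z - pd a (\<lambda>z. g z d b) z)) x"
    by (rule pd_cong_open[OF open_U x]) (simp add: christoffel_low_eq)
  also have "\<dots> = 1/2 * pd c (\<lambda>z. pd d (\<lambda>z. g z a b) z + pd b (\<lambda>z. g z a d) z - pd a (\<lambda>z. g z d b) z) x"
    by (rule pd_cmult) (intro differentiable_diff differentiable_add pd_metric_differentiable x)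
  also have "pd c (\<lambda>z. pd d (\<lambda>z. g z a b) z + pd b (\<lambda>z. g z a d) z - pd a (\<lambda>z. g z d b) z) x
     = pd c (\<lambda>z. pd d (\<lambda>z. g z a b) z + pd b (\<lambda>z. g z a d) z) x - ddg x c a d b"
    by (rule pd_diff) (intro differentiable_diff differentiable_add pd_metric_differentiable x)+
  also have "pd c (\<lambda>z. pd d (\<lambda>z. g z a b) z + pd b (\<lambda>z. g z a d) z) x = ddg x c d a b + ddg x c b a d"
    by (rule pd_add) (intro pd_metric_differentiable x)+
  finally show ?thesis .
qed

lemma metric_christoffel_christoffel: "(\<Sum>e\<in>UNIV. g x a e * (\<Sum>f\<in>UNIV. christoffel g x e c f * christoffel g x f d b)) =
   (\<Sum>f\<in>UNIV. christoffel_low x a c f * christoffel g x f d b)"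
proof -
  have "(\<Sum>e\<in>UNIV. g x a e * (\<Sum>f\<in>UNIV. christoffel g x e c f * christoffel g x f d b)) =
     (\<Sum>e\<in>UNIV. \<Sum>f\<in>UNIV. g x a e * christoffel g x e c f * christoffel g x f d b)"
    by (simp add: sum_distrib_left mult_ac)
  also have "\<dots> = (\<Sum>f\<in>UNIV. \<Sum>e\<in>UNIV. g x a e * christoffel g x e c f * christoffel g x f d b)"
    by (rule sum.swap)
  also have "\<dots> = (\<Sum>f\<in>UNIV. christoffel_low x a c f * christoffel g x f d b)"
    unfolding christoffel_low_def by (simp add: sum_distrib_right)
  finally show ?thesis .
qed

text \<open>Antisymmetry of \<open>R\<^sub>a\<^sub>b\<^sub>c\<^sub>d\<close> in \<open>a b\<close> is invisible in the definition of \<^const>\<open>riemann\<close>; this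
  coordinate expression exhibits it through the symmetry of the second derivatives of \<open>g\<close>.\<close>

lemma riemann_eq:
  assumes x: "x \<in> U"
  shows "riemann g x a b c d =
   1/2 * (ddg x c b a d - ddg x c a d b - ddg x d b a c + ddg x d a c b)
   - (\<Sum>e\<in>UNIV. christoffel_low x e c a * christoffel g x e d b) + (\<Sum>e\<in>UNIV. christoffel_low x e d a * christoffel g x e c b)"
proof -
  have A: "riemann g x a b c d = (\<Sum>e\<in>UNIV. g x a e * pd c (\<lambda>z. christoffel g z e d b) x)
     - (\<Sum>e\<in>UNIV. g x a e * pd d (\<lambda>z. christoffel g z e c b) x)
     + (\<Sum>f\<in>UNIV. christoffel_low x a c f * christoffel g x f d b) - (\<Sum>f\<in>UNIV. christoffel_low x a d f * christoffel g x f c b)"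
    unfolding riemann_def riemann_up_def metric_christoffel_christoffel[symmetric]
    by (simp add: algebra_simps sum.distrib sum_subtractf sum_distrib_left)
  have B: "(\<Sum>e\<in>UNIV. pd p (\<lambda>z. g z a e) x * christoffel g x e q b) =
      (\<Sum>e\<in>UNIV. christoffel_low x a p e * christoffel g x e q b) + (\<Sum>e\<in>UNIV. christoffel_low x e p a * christoffel g x e q b)" for p q
    by (simp add: pd_metric_eq[OF x] algebra_simps sum.distrib)
  have C: "ddg x c d a b = ddg x d c a b" by (rule pd_metric_commute[OF x])
  show ?thesis
    unfolding A metric_pd_christoffel[OF x] pd_christoffel_low[OF x] B using C by (simp add: algebra_simps)
qed

lemma ddg_sym: "x \<in> U \<Longrightarrow> ddg x p q r s = ddg x p q s r"
  by (rule pd_cong_open[OF open_U]) (simp_all add: pd_metric_sym)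

lemma riemann_antisym_first:
  assumes x: "x \<in> U"
  shows "riemann g x a b c d = - riemann g x b a c d"
proof -
  have s: "ddg x p q r s = ddg x p q s r" for p q r s by (rule ddg_sym[OF x])
  show ?thesis unfolding riemann_eq[OF x]
    using s[of c a b d] s[of c b d a] s[of d a b c] s[of d b c a]
      christoffel_contract_commute[OF x, of c a d b] christoffel_contract_commute[OF x, of d a c b]
    by (simp add: algebra_simps)
qed

lemma riemann_antisym_second: "riemann g x a b c d = - riemann g x a b d c"
  unfolding riemann_def riemann_up_def by (simp add: algebra_simps sum_subtractf sum.distrib sum_distrib_left)

lemma riemann_up_cyclic:
  assumes x: "x \<in> U"
  shows "riemann_up g x a b c d + riemann_up g x a c d b + riemann_up g x a d b c = 0"
proof -
  have p: "pd p (\<lambda>z. christoffel g z a q r) x = pd p (\<lambda>z. christoffel g z a r q) x" for p q r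
    by (rule pd_cong_open[OF open_U x]) (simp add: christoffel_sym)
  have s: "(\<Sum>e\<in>UNIV. christoffel g x a p e * christoffel g x e q r) = (\<Sum>e\<in>UNIV. christoffel g x a p e * christoffel g x e r q)" for p q r
    by (intro sum.cong refl) (simp add: christoffel_sym[OF x])
  show ?thesis unfolding riemann_up_def
    using p[of c d b] p[of d c b] p[of b d c] s[of c d b] s[of d c b] s[of b d c]
    by (simp add: algebra_simps sum_subtractf)
qed

lemma riemann_cyclic:
  assumes x: "x \<in> U"
  shows "riemann g x a b c d + riemann g x a c d b + riemann g x a d b c = 0"
proof -
  have "riemann g x a b c d + riemann g x a c d b + riemann g x a d b c =
     (\<Sum>e\<in>UNIV. g x a e * (riemann_up g x e b c d + riemann_up g x e c d b + riemann_up g x e d b c))"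
    unfolding riemann_def by (simp add: algebra_simps sum.distrib)
  also have "\<dots> = 0" by (simp add: riemann_up_cyclic[OF x])
  finally show ?thesis .
qed

text \<open>The classical argument: add the four cyclic identities obtained by cycling \<open>a b c d\<close>.\<close>

lemma riemann_pair_sym:
  assumes x: "x \<in> U"
  shows "riemann g x a b c d = riemann g x c d a b"
proof -
  note A1 = riemann_antisym_first[OF x] and A2 = riemann_antisym_second[of x] and B = riemann_cyclic[OF x]
  show ?thesis
    using B[of a b c d] B[of b c d a] B[of c d a b] B[of d a b c]
      A1[of b c d a] A1[of b d a c] A1[of b a c d] A1[of d a b c] A1[of d b c a] A1[of d c a b]
      A1[of c a b d] A1[of c b d a] A2[of a c d b] A2[of a d b c] A2[of c a b d] A2[of b c d a]
      A2[of b d a c] A2[of d a b c] A2[of d b c a] A2[of c b d a] A1[of a c b d] A1[of a d c b]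
      A2[of c d b a] A2[of c d a b]
    by linarith
qed

end

section \<open>Killing vectors\<close>

locale killing_chart = chart +
  fixes xi :: "pt \<Rightarrow> 4 \<Rightarrow> real"
  assumes killing: "killing U g xi"
begin

abbreviation "xi_low \<equiv> lower g xi"
abbreviation "nabla_xi \<equiv> cov_deriv_form g (lower g xi)"

lemma xi_differentiable: "y \<in> U \<Longrightarrow> (\<lambda>z. xi z a) differentiable (at y)"
  using killing smooth_on_iter_pd_differentiable[OF _ open_U, of _ y "[]"]
  unfolding killing_def by simp

lemma pd_xi_differentiable: "y \<in> U \<Longrightarrow> pd i (\<lambda>z. xi z a) differentiable (at y)"
  using killing smooth_on_iter_pd_differentiable[OF _ open_U, of _ y "[i]"]
  unfolding killing_def by simp

lemma pd_xi_commute: "y \<in> U \<Longrightarrow> pd j (pd i (\<lambda>z. xi z a)) y = pd i (pd j (\<lambda>z. xi z a)) y"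
  by (rule pd_commute[OF open_U]) (auto intro: xi_differentiable pd_xi_differentiable)

lemma xi_low_differentiable: "y \<in> U \<Longrightarrow> (\<lambda>z. xi_low z a) differentiable (at y)"
  unfolding lower_def by (intro differentiable_sum ballI differentiable_mult metric_differentiable xi_differentiable) auto

lemma pd_xi_low: "y \<in> U \<Longrightarrow> pd b (\<lambda>z. xi_low z c) y =
   (\<Sum>e\<in>UNIV. pd b (\<lambda>z. g z c e) y * xi y e + g y c e * pd b (\<lambda>z. xi z e) y)"
  unfolding lower_def
  by (subst pd_sum) (auto intro!: sum.cong pd_mult differentiable_mult metric_differentiable xi_differentiable)

lemma pd_xi_low_differentiable:
  assumes y: "y \<in> U"
  shows "pd b (\<lambda>z. xi_low z c) differentiable (at y)"
proof (rule differentiable_cong_open[OF open_U y pd_xi_low])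
  show "(\<lambda>z. \<Sum>e\<in>UNIV. pd b (\<lambda>z. g z c e) z * xi z e + g z c e * pd b (\<lambda>z. xi z e) z) differentiable (at y)"
    using y by (intro differentiable_sum ballI differentiable_mult differentiable_add metric_differentiable
        pd_metric_differentiable xi_differentiable pd_xi_differentiable) auto
qed

lemma pd_pd_xi_low:
  assumes x: "x \<in> U"
  shows "pd d (pd b (\<lambda>z. xi_low z c)) x =
   (\<Sum>e\<in>UNIV. ddg x d b c e * xi x e + pd b (\<lambda>z. g z c e) x * pd d (\<lambda>z. xi z e) x
      + (pd d (\<lambda>z. g z c e) x * pd b (\<lambda>z. xi z e) x + g x c e * pd d (pd b (\<lambda>z. xi z e)) x))"
proof -
  have "pd d (pd b (\<lambda>z. xi_low z c)) x =
     pd d (\<lambda>y. \<Sum>e\<in>UNIV. pd b (\<lambda>z. g z c e) y * xi y e + g y c e * pd b (\<lambda>z. xi z e) y) x"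
    by (rule pd_cong_open[OF open_U x]) (simp add: pd_xi_low)
  also have "\<dots> = (\<Sum>e\<in>UNIV. pd d (\<lambda>y. pd b (\<lambda>z. g z c e) y * xi y e + g y c e * pd b (\<lambda>z. xi z e) y) x)"
    by (rule pd_sum) (auto intro!: differentiable_add differentiable_mult metric_differentiable pd_metric_differentiable xi_differentiable pd_xi_differentiable x)
  also have "\<dots> = (\<Sum>e\<in>UNIV. ddg x d b c e * xi x e + pd b (\<lambda>z. g z c e) x * pd d (\<lambda>z. xi z e) x
      + (pd d (\<lambda>z. g z c e) x * pd b (\<lambda>z. xi z e) x + g x c e * pd d (pd b (\<lambda>z. xi z e)) x))"
    by (intro sum.cong refl, subst pd_add) (auto intro!: differentiable_mult metric_differentiable pd_metric_differentiable xi_differentiable pd_xi_differentiable x simp: pd_mult metric_differentiable[OF x] pd_metric_differentiable[OF x] xi_differentiable[OF x] pd_xi_differentiable[OF x])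
  finally show ?thesis .
qed

lemma pd_pd_xi_low_commute: "x \<in> U \<Longrightarrow> pd d (pd b (\<lambda>z. xi_low z c)) x = pd b (pd d (\<lambda>z. xi_low z c)) x"
  unfolding pd_pd_xi_low by (intro sum.cong refl) (simp add: pd_metric_commute[of x d b] pd_xi_commute[of x d b] algebra_simps)

lemma nabla_xi_eq: "nabla_xi y p q = pd p (\<lambda>z. xi_low z q) y - (\<Sum>f\<in>UNIV. christoffel g y f p q * xi_low y f)"
  unfolding cov_deriv_form_def by simp

lemma nabla_xi_differentiable: "y \<in> U \<Longrightarrow> (\<lambda>z. nabla_xi z b c) differentiable (at y)"
  unfolding cov_deriv_form_def
  by (intro differentiable_diff pd_xi_low_differentiable differentiable_sum ballI differentiable_mult christoffel_differentiable xi_low_differentiable) auto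

lemma nabla_xi_antisym: "y \<in> U \<Longrightarrow> nabla_xi y a b = - nabla_xi y b a"
  using killing unfolding killing_def by (simp add: eq_neg_iff_add_eq_0)

lemma pd_nabla_xi:
  assumes x: "x \<in> U"
  shows "pd d (\<lambda>z. nabla_xi z b c) x = pd d (pd b (\<lambda>z. xi_low z c)) x
   - (\<Sum>e\<in>UNIV. pd d (\<lambda>z. christoffel g z e b c) x * xi_low x e + christoffel g x e b c * pd d (\<lambda>z. xi_low z e) x)"
proof -
  have "pd d (\<lambda>z. nabla_xi z b c) x = pd d (pd b (\<lambda>z. xi_low z c)) x
     - pd d (\<lambda>z. \<Sum>e\<in>UNIV. christoffel g z e b c * xi_low z e) x"
    unfolding cov_deriv_form_def
    by (rule pd_diff) (intro pd_xi_low_differentiable differentiable_sum ballI differentiable_mult christoffel_differentiable xi_low_differentiable x finite)+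
  also have "pd d (\<lambda>z. \<Sum>e\<in>UNIV. christoffel g z e b c * xi_low z e) x =
     (\<Sum>e\<in>UNIV. pd d (\<lambda>z. christoffel g z e b c) x * xi_low x e + christoffel g x e b c * pd d (\<lambda>z. xi_low z e) x)"
    by (subst pd_sum) (auto intro!: sum.cong pd_mult differentiable_mult christoffel_differentiable xi_low_differentiable x)
  finally show ?thesis .
qed

definition nabla2_xi :: "pt \<Rightarrow> 4 \<Rightarrow> 4 \<Rightarrow> 4 \<Rightarrow> real" where "nabla2_xi x d b c = pd d (\<lambda>z. nabla_xi z b c) x
   - (\<Sum>e\<in>UNIV. christoffel g x e d b * nabla_xi x e c) - (\<Sum>e\<in>UNIV. christoffel g x e d c * nabla_xi x b e)"

lemma sum_nabla_xi_swap:
  assumes y: "y \<in> U"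
  shows "(\<Sum>e\<in>UNIV. h e * nabla_xi y e b) = - (\<Sum>e\<in>UNIV. h e * nabla_xi y b e)"
proof -
  have "\<And>e. nabla_xi y e b = - nabla_xi y b e" by (rule nabla_xi_antisym[OF y])
  then show ?thesis by (simp add: sum_negf)
qed

lemma nabla2_xi_antisym:
  assumes x: "x \<in> U"
  shows "nabla2_xi x d b c = - nabla2_xi x d c b"
proof -
  have "pd d (\<lambda>z. nabla_xi z b c) x = pd d (\<lambda>z. - nabla_xi z c b) x"
    by (rule pd_cong_open[OF open_U x]) (rule nabla_xi_antisym)
  also have "\<dots> = - pd d (\<lambda>z. nabla_xi z c b) x" by (rule pd_minus[OF nabla_xi_differentiable[OF x]])
  finally have 1: "pd d (\<lambda>z. nabla_xi z b c) x = - pd d (\<lambda>z. nabla_xi z c b) x" .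
  show ?thesis unfolding nabla2_xi_def 1
    using sum_nabla_xi_swap[OF x, of "\<lambda>e. christoffel g x e d b" c] sum_nabla_xi_swap[OF x, of "\<lambda>e. christoffel g x e d c" b]
    by simp
qed

lemma nabla2_xi_commutator:
  assumes x: "x \<in> U"
  shows "nabla2_xi x d b c - nabla2_xi x b d c = - (\<Sum>e\<in>UNIV. xi_low x e * riemann_up g x e c d b)"
proof -
  have cs: "(\<Sum>e\<in>UNIV. christoffel g x e d b * nabla_xi x e c) = (\<Sum>e\<in>UNIV. christoffel g x e b d * nabla_xi x e c)"
    by (intro sum.cong refl) (simp add: christoffel_sym[OF x])
  have L: "nabla2_xi x d b c - nabla2_xi x b d c =
     - (\<Sum>e\<in>UNIV. pd d (\<lambda>z. christoffel g z e b c) x * xi_low x e) + (\<Sum>e\<in>UNIV. pd b (\<lambda>z. christoffel g z e d c) x * xi_low x e)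
     + (\<Sum>e\<in>UNIV. christoffel g x e d c * (\<Sum>f\<in>UNIV. christoffel g x f b e * xi_low x f))
     - (\<Sum>e\<in>UNIV. christoffel g x e b c * (\<Sum>f\<in>UNIV. christoffel g x f d e * xi_low x f))"
    unfolding nabla2_xi_def pd_nabla_xi[OF x] cs pd_pd_xi_low_commute[OF x, of d b c] nabla_xi_eq[of x b] nabla_xi_eq[of x d]
    by (simp add: algebra_simps sum.distrib sum_subtractf)
  have R: "- (\<Sum>e\<in>UNIV. xi_low x e * riemann_up g x e c d b) =
     - (\<Sum>e\<in>UNIV. pd d (\<lambda>z. christoffel g z e b c) x * xi_low x e) + (\<Sum>e\<in>UNIV. pd b (\<lambda>z. christoffel g z e d c) x * xi_low x e)
     - (\<Sum>e\<in>UNIV. \<Sum>f\<in>UNIV. xi_low x e * christoffel g x e d f * christoffel g x f b c)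
     + (\<Sum>e\<in>UNIV. \<Sum>f\<in>UNIV. xi_low x e * christoffel g x e b f * christoffel g x f d c)"
    unfolding riemann_up_def
    by (simp add: algebra_simps sum.distrib sum_subtractf sum_distrib_left)
  have s1: "(\<Sum>e\<in>UNIV. christoffel g x e d c * (\<Sum>f\<in>UNIV. christoffel g x f b e * xi_low x f))
      = (\<Sum>e\<in>UNIV. \<Sum>f\<in>UNIV. xi_low x e * christoffel g x e b f * christoffel g x f d c)"
    by (simp add: sum_distrib_left) (subst sum.swap, simp add: mult_ac)
  have s2: "(\<Sum>e\<in>UNIV. christoffel g x e b c * (\<Sum>f\<in>UNIV. christoffel g x f d e * xi_low x f))
      = (\<Sum>e\<in>UNIV. \<Sum>f\<in>UNIV. xi_low x e * christoffel g x e d f * christoffel g x f b c)"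
    by (simp add: sum_distrib_left) (subst sum.swap, simp add: mult_ac)
  show ?thesis unfolding L R s1 s2 by simp
qed

text \<open>The Ricci identity fixes the antisymmetric part of \<open>\<nabla>\<^sub>d\<nabla>\<^sub>b\<xi>\<^sub>c\<close> in \<open>d b\<close>; antisymmetry in
  \<open>b c\<close> and the cyclic identity of \<open>R\<close> then determine it completely.\<close>

lemma nabla2_xi_riemann:
  assumes x: "x \<in> U"
  shows "nabla2_xi x d b c = (\<Sum>e\<in>UNIV. xi_low x e * riemann_up g x e d b c)"
proof -
  define P where "P p q r = (\<Sum>e\<in>UNIV. xi_low x e * riemann_up g x e p q r)" for p q r
  have B: "P c d b + P d b c + P b c d = 0"
  proof -
    have "P c d b + P d b c + P b c d = (\<Sum>e\<in>UNIV. xi_low x e * (riemann_up g x e c d b + riemann_up g x e d b c + riemann_up g x e b c d))"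
      unfolding P_def by (simp add: algebra_simps sum.distrib)
    also have "\<dots> = 0" by (simp add: riemann_up_cyclic[OF x])
    finally show ?thesis .
  qed
  have r: "nabla2_xi x p q r - nabla2_xi x q p r = - P r p q" for p q r unfolding P_def by (rule nabla2_xi_commutator[OF x])
  have a: "nabla2_xi x p q r = - nabla2_xi x p r q" for p q r by (rule nabla2_xi_antisym[OF x])
  show ?thesis
    using r[of d b c] r[of b c d] r[of c d b] a[of b d c] a[of c b d] a[of d c b] B
    unfolding P_def[symmetric] by linarith
qed

lemma sum_xi_riemann:
  assumes x: "x \<in> U"
  shows "(\<Sum>e\<in>UNIV. xi x e * riemann g x e d b c) = (\<Sum>e\<in>UNIV. xi_low x e * riemann_up g x e d b c)"
proof -
  have "(\<Sum>e\<in>UNIV. xi x e * riemann g x e d b c) = (\<Sum>e\<in>UNIV. \<Sum>f\<in>UNIV. xi x e * g x e f * riemann_up g x f d b c)"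
    unfolding riemann_def by (simp add: sum_distrib_left mult_ac)
  also have "\<dots> = (\<Sum>f\<in>UNIV. \<Sum>e\<in>UNIV. xi x e * g x e f * riemann_up g x f d b c)"
    by (rule sum.swap)
  also have "\<dots> = (\<Sum>f\<in>UNIV. xi_low x f * riemann_up g x f d b c)"
    unfolding lower_def by (simp add: sum_distrib_left sum_distrib_right metric_sym[OF x] mult_ac)
  finally show ?thesis .
qed

end

section \<open>The Bel tensor contracted with an aligned vector\<close>

definition bel_of :: "('n::finite \<Rightarrow> 'n \<Rightarrow> 'n \<Rightarrow> 'n \<Rightarrow> real) \<Rightarrow> ('n \<Rightarrow> 'n \<Rightarrow> real) \<Rightarrow> ('n \<Rightarrow> 'n \<Rightarrow> real)
   \<Rightarrow> 'n \<Rightarrow> 'n \<Rightarrow> 'n \<Rightarrow> 'n \<Rightarrow> real" where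
  "bel_of R h G al be la mu =
       (\<Sum>r\<in>UNIV. \<Sum>s\<in>UNIV. \<Sum>r'\<in>UNIV. \<Sum>s'\<in>UNIV. h r r' * h s s' *
          (R al r la s * R be r' mu s' + R al r mu s * R be r' la s'))
     - (1/2) * G al be * (\<Sum>r\<in>UNIV. \<Sum>t\<in>UNIV. \<Sum>s\<in>UNIV. \<Sum>r'\<in>UNIV. \<Sum>t'\<in>UNIV. \<Sum>s'\<in>UNIV.
          h r r' * h t t' * h s s' * R r t la s * R r' t' mu s')
     - (1/2) * G la mu * (\<Sum>r\<in>UNIV. \<Sum>s\<in>UNIV. \<Sum>t\<in>UNIV. \<Sum>r'\<in>UNIV. \<Sum>s'\<in>UNIV. \<Sum>t'\<in>UNIV.
          h r r' * h s s' * h t t' * R al r s t * R be r' s' t')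
     + (1/8) * G al be * G la mu *
         (\<Sum>r\<in>UNIV. \<Sum>t\<in>UNIV. \<Sum>s\<in>UNIV. \<Sum>n\<in>UNIV. \<Sum>r'\<in>UNIV. \<Sum>t'\<in>UNIV. \<Sum>s'\<in>UNIV. \<Sum>n'\<in>UNIV.
          h r r' * h t t' * h s s' * h n n' * R r t s n * R r' t' s' n')"

lemma bel_eq_bel_of: "bel g x = bel_of (riemann g x) (ginv g x) (g x)"
  by (simp add: fun_eq_iff bel_def bel_of_def Let_def)

text \<open>Then \<open>X \<lrcorner> R = L \<and> W\<close>, and in
  the contraction of the Bel tensor with \<open>X X X\<close> every term either carries a factor \<open>L\<^sub>m\<close> or
  contracts \<open>X\<close> (or \<open>X \<lrcorner> R\<close>) with \<open>X\<close> over an antisymmetric pair and vanishes.\<close>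

locale aligned_curvature =
  fixes R :: "'n::finite \<Rightarrow> 'n \<Rightarrow> 'n \<Rightarrow> 'n \<Rightarrow> real" and H G :: "'n \<Rightarrow> 'n \<Rightarrow> real"
    and X L :: "'n \<Rightarrow> real" and i :: 'n
  assumes R_antisym_first: "R a b c d = - R b a c d" and R_antisym_second: "R a b c d = - R a b d c" and R_pair_sym: "R a b c d = R c d a b"
    and G_sym: "G a b = G b a" and H_sym: "H a b = H b a"
    and H_G_inverse: "(\<Sum>b\<in>UNIV. H a b * G b c) = (if a = c then 1 else 0)"
    and L_lower: "L a = (\<Sum>b\<in>UNIV. G a b * X b)"
    and wedge_constraint: "L a * (\<Sum>e\<in>UNIV. X e * R e d b c) + L b * (\<Sum>e\<in>UNIV. X e * R e d c a)
       + L c * (\<Sum>e\<in>UNIV. X e * R e d a b) = 0"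
    and L_nonzero: "L i \<noteq> 0"
begin

definition RX :: "'n \<Rightarrow> 'n \<Rightarrow> 'n \<Rightarrow> real" where
  "RX d b c = (\<Sum>e\<in>UNIV. X e * R e d b c)"
definition W :: "'n \<Rightarrow> 'n \<Rightarrow> real" where
  "W d c = RX d i c / L i"

lemma RX_antisym: "RX d b c = - RX d c b"
  unfolding RX_def by (subst R_antisym_second) (simp add: sum_negf)

lemma RX_decompose: "RX d b c = L b * W d c - L c * W d b"
  unfolding W_def
  by (rule wedge_eq_zero_decompose[where F = "RX d", OF wedge_constraint[folded RX_def] RX_antisym L_nonzero])

lemma H_L: "(\<Sum>b\<in>UNIV. H a b * L b) = X a"
proof -
  have "(\<Sum>b\<in>UNIV. H a b * L b) = (\<Sum>b\<in>UNIV. \<Sum>c\<in>UNIV. H a b * G b c * X c)"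
    unfolding L_lower by (simp add: sum_distrib_left mult_ac)
  also have "\<dots> = (\<Sum>c\<in>UNIV. \<Sum>b\<in>UNIV. H a b * G b c * X c)" by (rule sum.swap)
  also have "\<dots> = (\<Sum>c\<in>UNIV. (\<Sum>b\<in>UNIV. H a b * G b c) * X c)" by (simp add: sum_distrib_right)
  also have "\<dots> = X a" by (simp only: H_G_inverse sum_kronecker_delta)
  finally show ?thesis .
qed

lemma L_H: "(\<Sum>b\<in>UNIV. L b * H b a) = X a"
  using H_L[of a] by (simp add: H_sym mult.commute)

lemma L_H': "(\<Sum>b\<in>UNIV. L b * H a b) = X a"
  using H_L[of a] by (simp add: mult.commute)

lemma X_RX: "(\<Sum>d\<in>UNIV. X d * RX d b c) = 0"
proof -
  have "(\<Sum>d\<in>UNIV. X d * RX d b c) = (\<Sum>d\<in>UNIV. \<Sum>e\<in>UNIV. X d * X e * R e d b c)"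
    unfolding RX_def by (simp add: sum_distrib_left mult_ac)
  also have "\<dots> = 0" by (rule sum_antisym_zero) (rule R_antisym_first)
  finally show ?thesis .
qed

definition WX :: "'n \<Rightarrow> real" where
  "WX c = (\<Sum>d\<in>UNIV. X d * W d c)"
definition lam :: "real" where
  "lam = WX i / L i"

lemma WX_proportional: "WX c = lam * L c"
proof -
  have "0 = (\<Sum>d\<in>UNIV. X d * (L i * W d c - L c * W d i))" using X_RX[of i c] by (simp add: RX_decompose)
  also have "\<dots> = L i * WX c - L c * WX i" unfolding WX_def by (simp add: algebra_simps sum_subtractf sum_distrib_left)
  finally show ?thesis unfolding lam_def using L_nonzero by (simp add: field_simps)
qed

definition RXX :: "'n \<Rightarrow> 'n \<Rightarrow> real" where
  "RXX r s = (\<Sum>c\<in>UNIV. X c * RX r c s)"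

lemma RXX_X: "(\<Sum>s\<in>UNIV. RXX r s * X s) = 0"
proof -
  have "(\<Sum>s\<in>UNIV. RXX r s * X s) = (\<Sum>s\<in>UNIV. \<Sum>c\<in>UNIV. X s * X c * RX r c s)"
    unfolding RXX_def by (simp add: sum_distrib_left sum_distrib_right mult_ac)
  also have "\<dots> = 0" by (rule sum_antisym_zero) (rule RX_antisym)
  finally show ?thesis .
qed

lemma sum3_RR_first: "(\<Sum>a\<in>UNIV. \<Sum>b\<in>UNIV. \<Sum>c\<in>UNIV. X a * X b * X c * (R a r c s * R b r' m s')) = RXX r s * RX r' m s'"
proof -
  have "(\<Sum>a\<in>UNIV. \<Sum>b\<in>UNIV. \<Sum>c\<in>UNIV. X a * X b * X c * (R a r c s * R b r' m s'))
    = (\<Sum>b\<in>UNIV. \<Sum>c\<in>UNIV. \<Sum>a\<in>UNIV. X a * X b * X c * (R a r c s * R b r' m s'))" by (rule sum_rotate3)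
  also have "\<dots> = (\<Sum>c\<in>UNIV. \<Sum>a\<in>UNIV. \<Sum>b\<in>UNIV. X a * X b * X c * (R a r c s * R b r' m s'))" by (rule sum_rotate3)
  also have "\<dots> = RXX r s * RX r' m s'"
    unfolding RXX_def RX_def by (simp add: sum_distrib_left sum_distrib_right mult_ac)
  finally show ?thesis .
qed

lemma sum3_RR_second: "(\<Sum>a\<in>UNIV. \<Sum>b\<in>UNIV. \<Sum>c\<in>UNIV. X a * X b * X c * (R a r m s * R b r' c s')) = RX r m s * RXX r' s'"
proof -
  have "(\<Sum>a\<in>UNIV. \<Sum>b\<in>UNIV. \<Sum>c\<in>UNIV. X a * X b * X c * (R a r m s * R b r' c s'))
    = (\<Sum>b\<in>UNIV. \<Sum>c\<in>UNIV. \<Sum>a\<in>UNIV. X a * X b * X c * (R a r m s * R b r' c s'))" by (rule sum_rotate3)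
  also have "\<dots> = (\<Sum>c\<in>UNIV. \<Sum>b\<in>UNIV. \<Sum>a\<in>UNIV. X a * X b * X c * (R a r m s * R b r' c s'))" by (rule sum.swap)
  also have "\<dots> = RX r m s * RXX r' s'"
    unfolding RXX_def RX_def by (simp add: sum_distrib_left sum_distrib_right mult_ac)
  finally show ?thesis .
qed

definition bel_RR :: "'n \<Rightarrow> 'n \<Rightarrow> 'n \<Rightarrow> 'n \<Rightarrow> real" where
  "bel_RR a b c m = (\<Sum>r\<in>UNIV. \<Sum>s\<in>UNIV. \<Sum>r'\<in>UNIV. \<Sum>s'\<in>UNIV.
   H r r' * H s s' * (R a r c s * R b r' m s' + R a r m s * R b r' c s'))"

lemma contract_bel_RR_RXX: "(\<Sum>a\<in>UNIV. \<Sum>b\<in>UNIV. \<Sum>c\<in>UNIV. X a * X b * X c * bel_RR a b c m) =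
  (\<Sum>r\<in>UNIV. \<Sum>s\<in>UNIV. \<Sum>r'\<in>UNIV. \<Sum>s'\<in>UNIV. H r r' * H s s' * (RXX r s * RX r' m s' + RX r m s * RXX r' s'))"
proof -
  have "(\<Sum>a\<in>UNIV. \<Sum>b\<in>UNIV. \<Sum>c\<in>UNIV. X a * X b * X c * bel_RR a b c m) =
    (\<Sum>a\<in>UNIV. \<Sum>b\<in>UNIV. \<Sum>c\<in>UNIV. \<Sum>r\<in>UNIV. \<Sum>s\<in>UNIV. \<Sum>r'\<in>UNIV. \<Sum>s'\<in>UNIV.
      X a * X b * X c * (H r r' * H s s' * (R a r c s * R b r' m s' + R a r m s * R b r' c s')))"
    unfolding bel_RR_def by (simp only: sum_distrib_left)
  also have "\<dots> = (\<Sum>r\<in>UNIV. \<Sum>s\<in>UNIV. \<Sum>r'\<in>UNIV. \<Sum>s'\<in>UNIV. \<Sum>a\<in>UNIV. \<Sum>b\<in>UNIV. \<Sum>c\<in>UNIV.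
      X a * X b * X c * (H r r' * H s s' * (R a r c s * R b r' m s' + R a r m s * R b r' c s')))"
    by (subst sum_rotate7, subst sum_rotate7, subst sum_rotate7, rule refl)
  also have "\<dots> = (\<Sum>r\<in>UNIV. \<Sum>s\<in>UNIV. \<Sum>r'\<in>UNIV. \<Sum>s'\<in>UNIV. H r r' * H s s' * (RXX r s * RX r' m s' + RX r m s * RXX r' s'))"
  proof (intro sum.cong refl)
    fix r s r' s'
    have "(\<Sum>a\<in>UNIV. \<Sum>b\<in>UNIV. \<Sum>c\<in>UNIV. X a * X b * X c * (H r r' * H s s' * (R a r c s * R b r' m s' + R a r m s * R b r' c s')))
      = H r r' * H s s' * ((\<Sum>a\<in>UNIV. \<Sum>b\<in>UNIV. \<Sum>c\<in>UNIV. X a * X b * X c * (R a r c s * R b r' m s'))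
         + (\<Sum>a\<in>UNIV. \<Sum>b\<in>UNIV. \<Sum>c\<in>UNIV. X a * X b * X c * (R a r m s * R b r' c s')))"
      by (simp add: sum_distrib_left sum.distrib algebra_simps)
    then show "(\<Sum>a\<in>UNIV. \<Sum>b\<in>UNIV. \<Sum>c\<in>UNIV. X a * X b * X c * (H r r' * H s s' * (R a r c s * R b r' m s' + R a r m s * R b r' c s')))
      = H r r' * H s s' * (RXX r s * RX r' m s' + RX r m s * RXX r' s')" unfolding sum3_RR_first sum3_RR_second .
  qed
  finally show ?thesis .
qed

lemma contract_RXX_L_W: "(\<Sum>r\<in>UNIV. \<Sum>s\<in>UNIV. \<Sum>r'\<in>UNIV. \<Sum>s'\<in>UNIV. H r r' * H s s' * RXX r s * L s' * W r' m) = 0"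
proof -
  have "(\<Sum>r\<in>UNIV. \<Sum>s\<in>UNIV. \<Sum>r'\<in>UNIV. \<Sum>s'\<in>UNIV. H r r' * H s s' * RXX r s * L s' * W r' m)
     = (\<Sum>r\<in>UNIV. \<Sum>s\<in>UNIV. \<Sum>r'\<in>UNIV. (H r r' * RXX r s * W r' m) * (\<Sum>s'\<in>UNIV. H s s' * L s'))"
    by (simp add: sum_distrib_left mult_ac)
  also have "\<dots> = (\<Sum>r\<in>UNIV. \<Sum>s\<in>UNIV. \<Sum>r'\<in>UNIV. H r r' * RXX r s * W r' m * X s)"
    by (simp add: H_L)
  also have "\<dots> = (\<Sum>r\<in>UNIV. \<Sum>r'\<in>UNIV. \<Sum>s\<in>UNIV. H r r' * RXX r s * W r' m * X s)"
    by (rule sum.cong[OF refl], rule sum.swap)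
  also have "\<dots> = (\<Sum>r\<in>UNIV. \<Sum>r'\<in>UNIV. H r r' * W r' m * (\<Sum>s\<in>UNIV. RXX r s * X s))"
    by (simp add: sum_distrib_left mult_ac)
  also have "\<dots> = 0" by (simp add: RXX_X)
  finally show ?thesis .
qed

lemma contract_L_W_RXX: "(\<Sum>r\<in>UNIV. \<Sum>s\<in>UNIV. \<Sum>r'\<in>UNIV. \<Sum>s'\<in>UNIV. H r r' * H s s' * L s * W r m * RXX r' s') = 0"
proof -
  have "(\<Sum>r\<in>UNIV. \<Sum>s\<in>UNIV. \<Sum>r'\<in>UNIV. \<Sum>s'\<in>UNIV. H r r' * H s s' * L s * W r m * RXX r' s')
     = (\<Sum>r\<in>UNIV. \<Sum>r'\<in>UNIV. \<Sum>s'\<in>UNIV. \<Sum>s\<in>UNIV. H r r' * H s s' * L s * W r m * RXX r' s')"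
    by (rule sum.cong[OF refl], rule sum_rotate3)
  also have "\<dots> = (\<Sum>r\<in>UNIV. \<Sum>r'\<in>UNIV. \<Sum>s'\<in>UNIV. (H r r' * W r m * RXX r' s') * (\<Sum>s\<in>UNIV. L s * H s s'))"
    by (simp add: sum_distrib_left mult_ac)
  also have "\<dots> = (\<Sum>r\<in>UNIV. \<Sum>r'\<in>UNIV. H r r' * W r m * (\<Sum>s'\<in>UNIV. RXX r' s' * X s'))"
    by (simp add: L_H sum_distrib_left mult_ac)
  also have "\<dots> = 0" by (simp add: RXX_X)
  finally show ?thesis .
qed

definition kappa_RR :: "real" where
  "kappa_RR = (\<Sum>r\<in>UNIV. \<Sum>s\<in>UNIV. \<Sum>r'\<in>UNIV. \<Sum>s'\<in>UNIV. H r r' * H s s' * (RXX r s * W r' s' + W r s * RXX r' s'))"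

lemma contract_bel_RR: "(\<Sum>a\<in>UNIV. \<Sum>b\<in>UNIV. \<Sum>c\<in>UNIV. X a * X b * X c * bel_RR a b c m) = L m * kappa_RR"
proof -
  have "(\<Sum>r\<in>UNIV. \<Sum>s\<in>UNIV. \<Sum>r'\<in>UNIV. \<Sum>s'\<in>UNIV. H r r' * H s s' * (RXX r s * RX r' m s' + RX r m s * RXX r' s'))
    = (\<Sum>r\<in>UNIV. \<Sum>s\<in>UNIV. \<Sum>r'\<in>UNIV. \<Sum>s'\<in>UNIV. L m * (H r r' * H s s' * (RXX r s * W r' s' + W r s * RXX r' s'))
        - H r r' * H s s' * RXX r s * L s' * W r' m - H r r' * H s s' * L s * W r m * RXX r' s')"
    by (intro sum.cong refl) (simp add: RX_decompose algebra_simps)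
  also have "\<dots> = L m * kappa_RR
      - (\<Sum>r\<in>UNIV. \<Sum>s\<in>UNIV. \<Sum>r'\<in>UNIV. \<Sum>s'\<in>UNIV. H r r' * H s s' * RXX r s * L s' * W r' m)
      - (\<Sum>r\<in>UNIV. \<Sum>s\<in>UNIV. \<Sum>r'\<in>UNIV. \<Sum>s'\<in>UNIV. H r r' * H s s' * L s * W r m * RXX r' s')"
    unfolding kappa_RR_def by (simp only: sum_subtractf sum_distrib_left)
  finally show ?thesis unfolding contract_bel_RR_RXX contract_RXX_L_W contract_L_W_RXX by simp
qed

definition bel_trace_right :: "'n \<Rightarrow> 'n \<Rightarrow> real" where
  "bel_trace_right c m = (\<Sum>r\<in>UNIV. \<Sum>t\<in>UNIV. \<Sum>s\<in>UNIV. \<Sum>r'\<in>UNIV. \<Sum>t'\<in>UNIV. \<Sum>s'\<in>UNIV.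
   H r r' * H t t' * H s s' * R r t c s * R r' t' m s')"

lemma X_R_third: "(\<Sum>c\<in>UNIV. X c * R r t c s) = RX s r t"
  unfolding RX_def by (intro sum.cong refl) (simp add: R_pair_sym[of r t])

lemma contract_bel_trace_right_RX: "(\<Sum>c\<in>UNIV. X c * bel_trace_right c m) =
  (\<Sum>r\<in>UNIV. \<Sum>t\<in>UNIV. \<Sum>s\<in>UNIV. \<Sum>r'\<in>UNIV. \<Sum>t'\<in>UNIV. \<Sum>s'\<in>UNIV.
   H r r' * H t t' * H s s' * RX s r t * R r' t' m s')"
proof -
  have "(\<Sum>c\<in>UNIV. X c * bel_trace_right c m) = (\<Sum>c\<in>UNIV. \<Sum>r\<in>UNIV. \<Sum>t\<in>UNIV. \<Sum>s\<in>UNIV. \<Sum>r'\<in>UNIV. \<Sum>t'\<in>UNIV. \<Sum>s'\<in>UNIV.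
     X c * (H r r' * H t t' * H s s' * R r t c s * R r' t' m s'))"
    unfolding bel_trace_right_def by (simp only: sum_distrib_left)
  also have "\<dots> = (\<Sum>r\<in>UNIV. \<Sum>t\<in>UNIV. \<Sum>s\<in>UNIV. \<Sum>r'\<in>UNIV. \<Sum>t'\<in>UNIV. \<Sum>s'\<in>UNIV. \<Sum>c\<in>UNIV.
     X c * (H r r' * H t t' * H s s' * R r t c s * R r' t' m s'))"
    by (rule sum_rotate7)
  also have "\<dots> = (\<Sum>r\<in>UNIV. \<Sum>t\<in>UNIV. \<Sum>s\<in>UNIV. \<Sum>r'\<in>UNIV. \<Sum>t'\<in>UNIV. \<Sum>s'\<in>UNIV.
     (H r r' * H t t' * H s s' * R r' t' m s') * (\<Sum>c\<in>UNIV. X c * R r t c s))"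
    by (simp add: sum_distrib_left mult_ac)
  also have "\<dots> = (\<Sum>r\<in>UNIV. \<Sum>t\<in>UNIV. \<Sum>s\<in>UNIV. \<Sum>r'\<in>UNIV. \<Sum>t'\<in>UNIV. \<Sum>s'\<in>UNIV.
   H r r' * H t t' * H s s' * RX s r t * R r' t' m s')"
    by (simp add: X_R_third mult_ac)
  finally show ?thesis .
qed

definition trace_W_RX :: "'n \<Rightarrow> real" where
  "trace_W_RX m = (\<Sum>t\<in>UNIV. \<Sum>s\<in>UNIV. \<Sum>t'\<in>UNIV. \<Sum>s'\<in>UNIV. H t t' * H s s' * W s t * RX t' m s')"

lemma contract_LW_R_first: "(\<Sum>r\<in>UNIV. \<Sum>t\<in>UNIV. \<Sum>s\<in>UNIV. \<Sum>r'\<in>UNIV. \<Sum>t'\<in>UNIV. \<Sum>s'\<in>UNIV.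
   H r r' * H t t' * H s s' * (L r * W s t) * R r' t' m s') = trace_W_RX m"
proof -
  have "(\<Sum>r\<in>UNIV. \<Sum>t\<in>UNIV. \<Sum>s\<in>UNIV. \<Sum>r'\<in>UNIV. \<Sum>t'\<in>UNIV. \<Sum>s'\<in>UNIV.
   H r r' * H t t' * H s s' * (L r * W s t) * R r' t' m s') =
   (\<Sum>t\<in>UNIV. \<Sum>s\<in>UNIV. \<Sum>r'\<in>UNIV. \<Sum>t'\<in>UNIV. \<Sum>s'\<in>UNIV. \<Sum>r\<in>UNIV.
   H r r' * H t t' * H s s' * (L r * W s t) * R r' t' m s')" by (rule sum_rotate6)
  also have "\<dots> = (\<Sum>t\<in>UNIV. \<Sum>s\<in>UNIV. \<Sum>r'\<in>UNIV. \<Sum>t'\<in>UNIV. \<Sum>s'\<in>UNIV.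
     (H t t' * H s s' * W s t * R r' t' m s') * (\<Sum>r\<in>UNIV. L r * H r r'))"
    by (simp add: sum_distrib_left mult_ac)
  also have "\<dots> = (\<Sum>t\<in>UNIV. \<Sum>s\<in>UNIV. \<Sum>r'\<in>UNIV. \<Sum>t'\<in>UNIV. \<Sum>s'\<in>UNIV.
     H t t' * H s s' * W s t * (X r' * R r' t' m s'))"
    by (simp add: L_H mult_ac)
  also have "\<dots> = (\<Sum>t\<in>UNIV. \<Sum>s\<in>UNIV. \<Sum>t'\<in>UNIV. \<Sum>s'\<in>UNIV. \<Sum>r'\<in>UNIV.
     H t t' * H s s' * W s t * (X r' * R r' t' m s'))"
    by (rule sum.cong[OF refl], rule sum.cong[OF refl], rule sum_rotate3)
  also have "\<dots> = trace_W_RX m"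
    unfolding trace_W_RX_def RX_def by (simp add: sum_distrib_left)
  finally show ?thesis .
qed

lemma contract_LW_R_second: "(\<Sum>r\<in>UNIV. \<Sum>t\<in>UNIV. \<Sum>s\<in>UNIV. \<Sum>r'\<in>UNIV. \<Sum>t'\<in>UNIV. \<Sum>s'\<in>UNIV.
   H r r' * H t t' * H s s' * (L t * W s r) * R r' t' m s') = - trace_W_RX m"
proof -
  have "(\<Sum>r\<in>UNIV. \<Sum>t\<in>UNIV. \<Sum>s\<in>UNIV. \<Sum>r'\<in>UNIV. \<Sum>t'\<in>UNIV. \<Sum>s'\<in>UNIV.
   H r r' * H t t' * H s s' * (L t * W s r) * R r' t' m s') =
   (\<Sum>r\<in>UNIV. \<Sum>s\<in>UNIV. \<Sum>r'\<in>UNIV. \<Sum>t'\<in>UNIV. \<Sum>s'\<in>UNIV. \<Sum>t\<in>UNIV.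
   H r r' * H t t' * H s s' * (L t * W s r) * R r' t' m s')" by (rule sum.cong[OF refl]) (rule sum_rotate5)
  also have "\<dots> = (\<Sum>r\<in>UNIV. \<Sum>s\<in>UNIV. \<Sum>r'\<in>UNIV. \<Sum>t'\<in>UNIV. \<Sum>s'\<in>UNIV.
     (H r r' * H s s' * W s r * R r' t' m s') * (\<Sum>t\<in>UNIV. L t * H t t'))"
    by (simp add: sum_distrib_left mult_ac)
  also have "\<dots> = (\<Sum>r\<in>UNIV. \<Sum>s\<in>UNIV. \<Sum>r'\<in>UNIV. \<Sum>t'\<in>UNIV. \<Sum>s'\<in>UNIV.
     H r r' * H s s' * W s r * (X t' * R r' t' m s'))"
    by (simp add: L_H mult_ac)
  also have "\<dots> = (\<Sum>r\<in>UNIV. \<Sum>s\<in>UNIV. \<Sum>r'\<in>UNIV. \<Sum>s'\<in>UNIV. \<Sum>t'\<in>UNIV.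
     H r r' * H s s' * W s r * (X t' * R r' t' m s'))"
    by (rule sum.cong[OF refl], rule sum.cong[OF refl], rule sum.cong[OF refl], rule sum.swap)
  also have "\<dots> = (\<Sum>r\<in>UNIV. \<Sum>s\<in>UNIV. \<Sum>r'\<in>UNIV. \<Sum>s'\<in>UNIV.
     H r r' * H s s' * W s r * (- RX r' m s'))"
  proof (intro sum.cong refl)
    fix r s r' s'
    have "(\<Sum>t'\<in>UNIV. X t' * R r' t' m s') = - RX r' m s'"
      unfolding RX_def by (subst R_antisym_first) (simp add: sum_negf)
    then show "(\<Sum>t'\<in>UNIV. H r r' * H s s' * W s r * (X t' * R r' t' m s')) = H r r' * H s s' * W s r * (- RX r' m s')"
      by (simp add: sum_distrib_left[symmetric])
  qed
  also have "\<dots> = - trace_W_RX m" unfolding trace_W_RX_def by (simp add: sum_negf)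
  finally show ?thesis .
qed

lemma contract_W_L_W: "(\<Sum>t\<in>UNIV. \<Sum>s\<in>UNIV. \<Sum>t'\<in>UNIV. \<Sum>s'\<in>UNIV. H t t' * H s s' * W s t * L s' * W t' m) = lam * lam * L m"
proof -
  have "(\<Sum>t\<in>UNIV. \<Sum>s\<in>UNIV. \<Sum>t'\<in>UNIV. \<Sum>s'\<in>UNIV. H t t' * H s s' * W s t * L s' * W t' m)
     = (\<Sum>t\<in>UNIV. \<Sum>s\<in>UNIV. \<Sum>t'\<in>UNIV. (H t t' * W s t * W t' m) * (\<Sum>s'\<in>UNIV. H s s' * L s'))"
    by (simp add: sum_distrib_left mult_ac)
  also have "\<dots> = (\<Sum>t\<in>UNIV. \<Sum>s\<in>UNIV. \<Sum>t'\<in>UNIV. H t t' * W t' m * (X s * W s t))"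
    by (simp add: H_L L_H' mult_ac)
  also have "\<dots> = (\<Sum>t\<in>UNIV. \<Sum>t'\<in>UNIV. \<Sum>s\<in>UNIV. H t t' * W t' m * (X s * W s t))"
    by (rule sum.cong[OF refl]) (rule sum.swap)
  also have "\<dots> = (\<Sum>t\<in>UNIV. \<Sum>t'\<in>UNIV. H t t' * W t' m * WX t)"
    unfolding WX_def by (simp add: sum_distrib_left)
  also have "\<dots> = (\<Sum>t'\<in>UNIV. \<Sum>t\<in>UNIV. H t t' * W t' m * WX t)" by (rule sum.swap)
  also have "\<dots> = (\<Sum>t'\<in>UNIV. (lam * W t' m) * (\<Sum>t\<in>UNIV. L t * H t t'))"
    by (simp add: WX_proportional sum_distrib_left mult_ac)
  also have "\<dots> = lam * WX m" unfolding WX_def by (simp add: L_H sum_distrib_left mult_ac)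
  finally show ?thesis by (simp add: WX_proportional)
qed

definition kappa_trace :: "real" where
  "kappa_trace = (\<Sum>t\<in>UNIV. \<Sum>s\<in>UNIV. \<Sum>t'\<in>UNIV. \<Sum>s'\<in>UNIV. H t t' * H s s' * W s t * W t' s')"

lemma trace_W_RX_eq: "trace_W_RX m = L m * kappa_trace - lam * lam * L m"
proof -
  have "trace_W_RX m = (\<Sum>t\<in>UNIV. \<Sum>s\<in>UNIV. \<Sum>t'\<in>UNIV. \<Sum>s'\<in>UNIV. L m * (H t t' * H s s' * W s t * W t' s')
     - H t t' * H s s' * W s t * L s' * W t' m)"
    unfolding trace_W_RX_def by (intro sum.cong refl) (simp add: RX_decompose algebra_simps)
  also have "\<dots> = L m * kappa_trace - (\<Sum>t\<in>UNIV. \<Sum>s\<in>UNIV. \<Sum>t'\<in>UNIV. \<Sum>s'\<in>UNIV. H t t' * H s s' * W s t * L s' * W t' m)"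
    unfolding kappa_trace_def by (simp only: sum_subtractf sum_distrib_left)
  finally show ?thesis unfolding contract_W_L_W .
qed

lemma contract_bel_trace_right: "(\<Sum>c\<in>UNIV. X c * bel_trace_right c m) = 2 * (L m * kappa_trace - lam * lam * L m)"
proof -
  have "(\<Sum>c\<in>UNIV. X c * bel_trace_right c m) =
    (\<Sum>r\<in>UNIV. \<Sum>t\<in>UNIV. \<Sum>s\<in>UNIV. \<Sum>r'\<in>UNIV. \<Sum>t'\<in>UNIV. \<Sum>s'\<in>UNIV.
      H r r' * H t t' * H s s' * (L r * W s t) * R r' t' m s' - H r r' * H t t' * H s s' * (L t * W s r) * R r' t' m s')"
    unfolding contract_bel_trace_right_RX by (intro sum.cong refl) (simp add: RX_decompose algebra_simps)
  also have "\<dots> = (\<Sum>r\<in>UNIV. \<Sum>t\<in>UNIV. \<Sum>s\<in>UNIV. \<Sum>r'\<in>UNIV. \<Sum>t'\<in>UNIV. \<Sum>s'\<in>UNIV.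
      H r r' * H t t' * H s s' * (L r * W s t) * R r' t' m s') - (\<Sum>r\<in>UNIV. \<Sum>t\<in>UNIV. \<Sum>s\<in>UNIV. \<Sum>r'\<in>UNIV. \<Sum>t'\<in>UNIV. \<Sum>s'\<in>UNIV.
      H r r' * H t t' * H s s' * (L t * W s r) * R r' t' m s')"
    by (simp only: sum_subtractf)
  also have "\<dots> = trace_W_RX m - (- trace_W_RX m)" by (simp only: contract_LW_R_first contract_LW_R_second)
  finally show ?thesis unfolding trace_W_RX_eq by simp
qed

definition bel_trace_left :: "'n \<Rightarrow> 'n \<Rightarrow> real" where
  "bel_trace_left a b = (\<Sum>r\<in>UNIV. \<Sum>s\<in>UNIV. \<Sum>t\<in>UNIV. \<Sum>r'\<in>UNIV. \<Sum>s'\<in>UNIV. \<Sum>t'\<in>UNIV.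
          H r r' * H s s' * H t t' * R a r s t * R b r' s' t')"
definition kretschmann :: "real" where
  "kretschmann = (\<Sum>r\<in>UNIV. \<Sum>t\<in>UNIV. \<Sum>s\<in>UNIV. \<Sum>n\<in>UNIV. \<Sum>r'\<in>UNIV. \<Sum>t'\<in>UNIV. \<Sum>s'\<in>UNIV. \<Sum>n'\<in>UNIV.
          H r r' * H t t' * H s s' * H n n' * R r t s n * R r' t' s' n')"

lemma bel_of_decompose: "bel_of R H G a b c m = bel_RR a b c m - 1/2 * G a b * bel_trace_right c m - 1/2 * G c m * bel_trace_left a b + 1/8 * G a b * G c m * kretschmann"
  unfolding bel_of_def bel_RR_def bel_trace_right_def bel_trace_left_def kretschmann_def by simp

lemma X_G: "(\<Sum>c\<in>UNIV. X c * G c m) = L m"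
  unfolding L_lower by (simp add: G_sym mult.commute)

lemma contract_bel_of: "(\<Sum>a\<in>UNIV. \<Sum>b\<in>UNIV. \<Sum>c\<in>UNIV. bel_of R H G a b c m * X a * X b * X c) =
   L m * (kappa_RR - 1/2 * (\<Sum>a\<in>UNIV. \<Sum>b\<in>UNIV. X a * X b * G a b) * (2 * (kappa_trace - lam * lam))
     - 1/2 * (\<Sum>a\<in>UNIV. \<Sum>b\<in>UNIV. X a * X b * bel_trace_left a b) + 1/8 * kretschmann * (\<Sum>a\<in>UNIV. \<Sum>b\<in>UNIV. X a * X b * G a b))"
proof -
  have "(\<Sum>a\<in>UNIV. \<Sum>b\<in>UNIV. \<Sum>c\<in>UNIV. bel_of R H G a b c m * X a * X b * X c) =
    (\<Sum>a\<in>UNIV. \<Sum>b\<in>UNIV. \<Sum>c\<in>UNIV. X a * X b * X c * bel_RR a b c m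
      - (1/2) * (X a * X b * G a b) * (X c * bel_trace_right c m) - (1/2) * (X a * X b * bel_trace_left a b) * (X c * G c m)
      + (1/8 * kretschmann) * (X a * X b * G a b) * (X c * G c m))"
    by (intro sum.cong refl) (simp add: bel_of_decompose algebra_simps)
  also have "\<dots> = (\<Sum>a\<in>UNIV. \<Sum>b\<in>UNIV. \<Sum>c\<in>UNIV. X a * X b * X c * bel_RR a b c m)
      - (\<Sum>a\<in>UNIV. \<Sum>b\<in>UNIV. \<Sum>c\<in>UNIV. (1/2) * (X a * X b * G a b) * (X c * bel_trace_right c m))
      - (\<Sum>a\<in>UNIV. \<Sum>b\<in>UNIV. \<Sum>c\<in>UNIV. (1/2) * (X a * X b * bel_trace_left a b) * (X c * G c m))
      + (\<Sum>a\<in>UNIV. \<Sum>b\<in>UNIV. \<Sum>c\<in>UNIV. (1/8 * kretschmann) * (X a * X b * G a b) * (X c * G c m))"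
    by (simp only: sum.distrib sum_subtractf)
  also have "\<dots> = L m * kappa_RR - (1/2) * (\<Sum>a\<in>UNIV. \<Sum>b\<in>UNIV. X a * X b * G a b) * (2 * (L m * kappa_trace - lam * lam * L m))
      - (1/2) * (\<Sum>a\<in>UNIV. \<Sum>b\<in>UNIV. X a * X b * bel_trace_left a b) * L m
      + (1/8 * kretschmann) * (\<Sum>a\<in>UNIV. \<Sum>b\<in>UNIV. X a * X b * G a b) * L m"
    by (simp only: sum3_mult_separate contract_bel_RR contract_bel_trace_right X_G)
  finally show ?thesis by (simp add: algebra_simps)
qed

lemma contract_bel_of_proportional:
  "\<exists>\<kappa>. \<forall>m. (\<Sum>a\<in>UNIV. \<Sum>b\<in>UNIV. \<Sum>c\<in>UNIV. bel_of R H G a b c m * X a * X b * X c) = \<kappa> * L m"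
  by (intro exI allI, subst contract_bel_of, rule mult.commute)

end

section \<open>Hypersurface-orthogonal Killing vectors\<close>

locale hso_killing_chart = killing_chart +
  assumes hypersurface_orthogonal: "\<forall>x\<in>U. \<forall>a b c. wedge12 (lower g xi) (ext_d (lower g xi)) x a b c = 0"
begin

lemma xi_low_wedge_nabla_xi:
  assumes x: "x \<in> U"
  shows "xi_low x a * nabla_xi x b c + xi_low x b * nabla_xi x c a + xi_low x c * nabla_xi x a b = 0"
proof -
  have "ext_d xi_low x b c = 2 * nabla_xi x b c" for b c
  proof -
    have "(\<Sum>f\<in>UNIV. christoffel g x f c b * xi_low x f) = (\<Sum>f\<in>UNIV. christoffel g x f b c * xi_low x f)"
      by (intro sum.cong refl) (simp add: christoffel_sym[OF x])
    then show ?thesis using nabla_xi_antisym[OF x, of c b] unfolding ext_d_def nabla_xi_eq by simp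
  qed
  moreover have "wedge12 xi_low (ext_d xi_low) x a b c = 0" using hypersurface_orthogonal x by blast
  ultimately show ?thesis unfolding wedge12_def by (simp add: algebra_simps)
qed

text \<open>Differentiating \<open>\<xi> \<and> \<nabla>\<xi> = 0\<close>: the Christoffel terms of the Leibniz rule recombine
  into instances of \<open>\<xi> \<and> \<nabla>\<xi>\<close> and drop out, leaving \<open>\<nabla>\<xi> \<and> \<nabla>\<xi> + \<xi> \<and> \<nabla>\<nabla>\<xi> = 0\<close>.\<close>

lemma nabla_wedge_identity:
  assumes x: "x \<in> U"
  shows "nabla_xi x d a * nabla_xi x b c + nabla_xi x d b * nabla_xi x c a + nabla_xi x d c * nabla_xi x a b
   + xi_low x a * nabla2_xi x d b c + xi_low x b * nabla2_xi x d c a + xi_low x c * nabla2_xi x d a b = 0"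
proof -
  define W where "W y = xi_low y a * nabla_xi y b c + xi_low y b * nabla_xi y c a + xi_low y c * nabla_xi y a b" for y
  have "pd d W x = pd d (\<lambda>y. 0) x"
    by (rule pd_cong_open[OF open_U x]) (simp add: W_def xi_low_wedge_nabla_xi)
  then have W0: "pd d W x = 0" by (simp add: pd_const)
  have pd_xi_low_eq: "pd d (\<lambda>z. xi_low z p) x = nabla_xi x d p + (\<Sum>e\<in>UNIV. christoffel g x e d p * xi_low x e)" for p
    unfolding nabla_xi_eq by simp
  have pd_nabla_xi_eq: "pd d (\<lambda>z. nabla_xi z p q) x = nabla2_xi x d p q
      + (\<Sum>e\<in>UNIV. christoffel g x e d p * nabla_xi x e q) + (\<Sum>e\<in>UNIV. christoffel g x e d q * nabla_xi x p e)" for p q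
    unfolding nabla2_xi_def by simp
  have dW: "pd d W x = (pd d (\<lambda>z. xi_low z a) x * nabla_xi x b c + xi_low x a * pd d (\<lambda>z. nabla_xi z b c) x)
     + (pd d (\<lambda>z. xi_low z b) x * nabla_xi x c a + xi_low x b * pd d (\<lambda>z. nabla_xi z c a) x)
     + (pd d (\<lambda>z. xi_low z c) x * nabla_xi x a b + xi_low x c * pd d (\<lambda>z. nabla_xi z a b) x)"
    unfolding W_def
    by (simp add: pd_add pd_mult differentiable_add differentiable_mult xi_low_differentiable nabla_xi_differentiable x)
  have christoffel_terms: "(\<Sum>e\<in>UNIV.
        christoffel g x e d a * (xi_low x e * nabla_xi x b c + xi_low x b * nabla_xi x c e + xi_low x c * nabla_xi x e b)
      + christoffel g x e d b * (xi_low x a * nabla_xi x e c + xi_low x e * nabla_xi x c a + xi_low x c * nabla_xi x a e)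
      + christoffel g x e d c * (xi_low x a * nabla_xi x b e + xi_low x b * nabla_xi x e a + xi_low x e * nabla_xi x a b)) = 0"
    by (simp add: xi_low_wedge_nabla_xi[OF x])
  have "pd d W x = nabla_xi x d a * nabla_xi x b c + nabla_xi x d b * nabla_xi x c a + nabla_xi x d c * nabla_xi x a b
   + xi_low x a * nabla2_xi x d b c + xi_low x b * nabla2_xi x d c a + xi_low x c * nabla2_xi x d a b
   + (\<Sum>e\<in>UNIV.
        christoffel g x e d a * (xi_low x e * nabla_xi x b c + xi_low x b * nabla_xi x c e + xi_low x c * nabla_xi x e b)
      + christoffel g x e d b * (xi_low x a * nabla_xi x e c + xi_low x e * nabla_xi x c a + xi_low x c * nabla_xi x a e)
      + christoffel g x e d c * (xi_low x a * nabla_xi x b e + xi_low x b * nabla_xi x e a + xi_low x e * nabla_xi x a b))"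
    unfolding dW pd_xi_low_eq pd_nabla_xi_eq
    by (simp add: algebra_simps sum.distrib sum_distrib_left sum_distrib_right)
  then show ?thesis using W0 christoffel_terms by simp
qed

lemma nabla_xi_wedge_nabla_xi:
  assumes x: "x \<in> U" and i: "xi_low x i \<noteq> 0"
  shows "nabla_xi x d a * nabla_xi x b c + nabla_xi x d b * nabla_xi x c a + nabla_xi x d c * nabla_xi x a b = 0"
proof -
  define V where "V q = nabla_xi x i q / xi_low x i" for q
  have decompose: "nabla_xi x p q = xi_low x p * V q - xi_low x q * V p" for p q
    unfolding V_def using xi_low_wedge_nabla_xi[OF x] nabla_xi_antisym[OF x] i
    by (rule wedge_eq_zero_decompose)
  show ?thesis unfolding decompose by (simp add: algebra_simps)
qed

lemma xi_low_wedge_riemann_xi: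
  assumes x: "x \<in> U" and i: "xi_low x i \<noteq> 0"
  shows "xi_low x a * (\<Sum>e\<in>UNIV. xi x e * riemann g x e d b c) + xi_low x b * (\<Sum>e\<in>UNIV. xi x e * riemann g x e d c a)
     + xi_low x c * (\<Sum>e\<in>UNIV. xi x e * riemann g x e d a b) = 0"
  using nabla_wedge_identity[OF x, of d a b c] nabla_xi_wedge_nabla_xi[OF x i, of d a b c]
  unfolding sum_xi_riemann[OF x] nabla2_xi_riemann[OF x] by simp

lemma bel_current_proportional:
  assumes x: "x \<in> U" and i: "xi_low x i \<noteq> 0"
  shows "\<exists>\<kappa>. \<forall>m. bel_current g xi x m = \<kappa> * xi_low x m"
proof -
  interpret aligned_curvature "riemann g x" "ginv g x" "g x" "xi x" "xi_low x" i
  proof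
    show "riemann g x a b c d = - riemann g x b a c d" for a b c d by (rule riemann_antisym_first[OF x])
    show "riemann g x a b c d = - riemann g x a b d c" for a b c d by (rule riemann_antisym_second)
    show "riemann g x a b c d = riemann g x c d a b" for a b c d by (rule riemann_pair_sym[OF x])
    show "g x a b = g x b a" for a b by (rule metric_sym[OF x])
    show "ginv g x a b = ginv g x b a" for a b by (rule ginv_sym[OF x])
    show "(\<Sum>b\<in>UNIV. ginv g x a b * g x b c) = (if a = c then 1 else 0)" for a c by (rule ginv_metric[OF x])
    show "xi_low x a = (\<Sum>b\<in>UNIV. g x a b * xi x b)" for a by (simp add: lower_def)
    show "xi_low x a * (\<Sum>e\<in>UNIV. xi x e * riemann g x e d b c) + xi_low x b * (\<Sum>e\<in>UNIV. xi x e * riemann g x e d c a)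
        + xi_low x c * (\<Sum>e\<in>UNIV. xi x e * riemann g x e d a b) = 0" for a b c d
      by (rule xi_low_wedge_riemann_xi[OF x i])
  qed (rule i)
  show ?thesis
    using contract_bel_of_proportional
    unfolding bel_current_def bel_current3_def sum3_symmetrize bel_eq_bel_of .
qed

end

theorem mainTheorem4:
  fixes U :: "(real ^ 4) set"
    and g :: "real ^ 4 \<Rightarrow> 4 \<Rightarrow> 4 \<Rightarrow> real"
    and xi :: "real ^ 4 \<Rightarrow> 4 \<Rightarrow> real"
  assumes "spacetime_chart U g"
    and "killing U g xi"
    and "\<forall>x\<in>U. \<forall>a b c. wedge12 (lower g xi) (ext_d (lower g xi)) x a b c = 0"
  shows "\<forall>x\<in>U. \<forall>a b. wedge11 (bel_current g xi) (lower g xi) x a b = 0"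
proof (intro ballI allI)
  interpret hso_killing_chart U g xi
    using assms by unfold_locales auto
  fix x a b assume x: "x \<in> U"
  show "wedge11 (bel_current g xi) (lower g xi) x a b = 0"
  proof (cases "\<exists>i. lower g xi x i \<noteq> 0")
    case True
    then obtain \<kappa> where "\<forall>m. bel_current g xi x m = \<kappa> * lower g xi x m"
      using bel_current_proportional[OF x] by blast
    then show ?thesis by (simp add: wedge11_def)
  next
    case False
    then show ?thesis by (simp add: wedge11_def)
  qed
qed

end
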